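(* For integers $0\le l<m\le N$, \[ \langle z^{N-m}\rangle\sum_{\substack{\lambda\in\mathbf D_N\\ P\in\mathbf L_{N,l}(\lambda)}} t^{|\delta/\lambda|}\prod_{\substack{1<i\le N\\ c_i(\lambda)=c_{i-1}(\lambda)+1}}\bigl(1+z\,t^{-c_i(\lambda)}\bigr)\,q^{\mathrm{dinv}(P)}x^{\mathrm{wt}_+(P)} =\sum_{\substack{J\subseteq[m-1]\\|J|=l}}\ \sum_{\substack{\mathbf a\in\mathbb N^{m-1},\ \tau\in\mathbb N^m\\ |\tau|=N-m}} t^{|\mathbf a|}\,q^{d((0,\mathbf a),\tau)+h_J(\mathbf a)}\,N_{((0,\mathbf a)+(1^m)+\tau)/((\mathbf a,0)+\varepsilon_J)}(X;q). \]
   Context: $\mathbb N=\{0,1,\dots\}$, $[a,b]=\{a,\dots,b\}$, $[b]=[1,b]$, $\varepsilon_J=\sum_{j\in J}\varepsilon_j$ (standard unit vectors), $|\mathbf a|=\sum a_i$, $(1^m)=(1,\dots,1)$. Dyck paths $\mathbf D_N$: south/east lattice paths from $(0,N)$ to $(N,0)$ weakly below the segment joining them; $\delta$ is the staircase path; $|\delta/\lambda|$ is the number of lattice squares above $\lambda$ and below $\delta$. $r_i(\lambda)$ is the number of such squares in the $i$-th row (rows numbered north to south); $c_i(\lambda)$ is the number of such squares in the $i$-th column (columns numbered right to left). A labelling $P\in\mathbb N^N$ attaches $P_i$ to the $i$-th south step from the north, strictly increasing from north to south along each vertical run; $\mathbf L_{N,l}(\lambda)$ ($0\le l<N$) is the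 set of labellings with exactly $l$ zeros, none on a south step on the line $x=0$. $\mathrm{dinv}(P)$ counts pairs $i<j$ with $r_i=r_j$ and $P_i<P_j$, or $r_i=r_j+1$ and $P_i>P_j$; $x^{\mathrm{wt}_+(P)}=\prod_{i:P_i\neq0}x_{P_i}$. For $\eta,\tau\in\mathbb N^m$: $d(\eta,\tau)=\sum_{1\le j<r\le m}\bigl|[\eta_j,\eta_j+\tau_j]\cap[\eta_r,\eta_r+\tau_r-1]\bigr|$. For a vector $\eta$ of length $n$ and $I\subseteq[n]$: $h_I(\eta)=|\{(r,s):1\le r<s\le n,\ r\in I,\ s\notin I,\ \eta_s=\eta_r+1\}|$. Row shapes: for $\alpha,\beta\in\mathbb Z^n$ with $\alpha_j\le\beta_j$, $\beta/\alpha$ is the tuple of single rows where row $j$ consists of boxes with $x$-coordinates $\alpha_j+1,\dots,\beta_j$; the boxes with $x$-coordinates $\alpha_j$ and $\beta_j+1$ are called adjacent to the left and right ends of row $j$ (also when the row is empty). A $w_0$-triple is $(u,v,w)$ with $v$ a box in row $r$, $u,w$ each a box of, or adjacent to, a row $j>r$, and $x$-coordinates $i_u=i_v$, $i_w=i_v+1$. A row strict tableau $S:\beta/\alpha\to\mathbb Z_+$ is strictly increasing along each row; a $w_0$-triple is increasing in $S$ if $S(u)<S(v)<S(w)$, with the convention $S(u)=-\infty$ if $u$ is adjacent to the left end of a row and $S(w)=+\infty$ if $w$ is adjacent to the right end of a row; $h_{w_0}(S)$ is the number of increasing $w_0$-triples. Define $N_{\beta/\alpha}(X;q)=\sum_S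 q^{h_{w_0}(S)}\prod_{u\in\beta/\alpha}x_{S(u)}$ over row strict tableaux $S:\beta/\alpha\to\mathbb Z_+$, and $N_{\beta/\alpha}=0$ if $\alpha_j>\beta_j$ for some $j$. *)

theory Defs
  imports "HOL-Computational_Algebra.Polynomial"
begin

text \<open>A Dyck path lambda in D_N is encoded by the function e, where e i is the
x-coordinate of the i-th south step counted from the north (1 <= i <= N);
e is zero outside [1,N].  The path from (0,N) to (N,0) stays weakly below the
segment x + y = N iff e i <= i - 1 for all i, and south/east paths correspond to
weakly increasing e.\<close>

definition dyck :: "nat \<Rightarrow> (nat \<Rightarrow> nat) set" where
  "dyck N = {e. (\<forall>i\<in>{1..N}. e i \<le> i - 1) \<and> (\<forall>i\<in>{1..<N}. e i \<le> e (Suc i))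
              \<and> (\<forall>i. i \<notin> {1..N} \<longrightarrow> e i = 0)}"

text \<open>r_i(lambda): squares in row i above lambda and below the staircase delta.\<close>
definition rowarea :: "(nat \<Rightarrow> nat) \<Rightarrow> nat \<Rightarrow> nat" where
  "rowarea e i = (i - 1) - e i"

definition area :: "nat \<Rightarrow> (nat \<Rightarrow> nat) \<Rightarrow> nat" where
  "area N e = (\<Sum>i=1..N. rowarea e i)"

text \<open>c_i(lambda): squares in the i-th column counted from the right, i.e. the column
between x = N - i and x = N - i + 1.  The unit square of row j in that column lies
above lambda and below delta iff e j <= N - i and N - i + 1 <= j - 1.\<close>
definition colarea :: "nat \<Rightarrow> (nat \<Rightarrow> nat) \<Rightarrow> nat \<Rightarrow> nat" where
  "colarea N e i = card {j \<in> {1..N}. N + 2 \<le> j + i \<and> e j + i \<le> N}"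

text \<open>L_{N,l}(lambda): labellings (P i attached to the i-th south step, zero outside
[1,N]) strictly increasing along vertical runs, with exactly l zeros, none on a south
step on the line x = 0.\<close>
definition labellings :: "nat \<Rightarrow> nat \<Rightarrow> (nat \<Rightarrow> nat) \<Rightarrow> (nat \<Rightarrow> nat) set" where
  "labellings N l e = {P. (\<forall>i. i \<notin> {1..N} \<longrightarrow> P i = 0)
      \<and> (\<forall>i\<in>{1..<N}. e i = e (Suc i) \<longrightarrow> P i < P (Suc i))
      \<and> card {i\<in>{1..N}. P i = 0} = l
      \<and> (\<forall>i\<in>{1..N}. e i = 0 \<longrightarrow> P i \<noteq> 0)}"

definition dinv :: "nat \<Rightarrow> (nat \<Rightarrow> nat) \<Rightarrow> (nat \<Rightarrow> nat) \<Rightarrow> nat" where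
  "dinv N e P = card {(i,j). i \<in> {1..N} \<and> j \<in> {1..N} \<and> i < j \<and>
      ((rowarea e i = rowarea e j \<and> P i < P j) \<or> (rowarea e i = rowarea e j + 1 \<and> P i > P j))}"

text \<open>x^{wt_+(P)} is the monomial prod_{k >= 1} x_k ^ (mu k) iff this holds.\<close>
definition has_wt :: "nat \<Rightarrow> (nat \<Rightarrow> nat) \<Rightarrow> (nat \<Rightarrow> nat) \<Rightarrow> bool" where
  "has_wt N P \<mu> \<longleftrightarrow> (\<forall>k\<ge>1. card {i\<in>{1..N}. P i = k} = \<mu> k)"

text \<open>Coefficient of x^mu in the left-hand sum, as a polynomial in z.\<close>
definition lhs_poly :: "nat \<Rightarrow> nat \<Rightarrow> (nat \<Rightarrow> nat) \<Rightarrow> 'a::field \<Rightarrow> 'a \<Rightarrow> 'a poly" where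
  "lhs_poly N l \<mu> q t =
     (\<Sum>e\<in>dyck N. \<Sum>P\<in>{P\<in>labellings N l e. has_wt N P \<mu>}.
        smult (t ^ area N e * q ^ dinv N e P)
          (\<Prod>i\<in>{i\<in>{2..N}. colarea N e i = colarea N e (i - 1) + 1}.
              [:1, inverse (t ^ colarea N e i):]))"

definition dstat :: "nat \<Rightarrow> (nat \<Rightarrow> nat) \<Rightarrow> (nat \<Rightarrow> nat) \<Rightarrow> nat" where
  "dstat m \<eta> \<tau> = (\<Sum>j\<in>{1..m}. \<Sum>r\<in>{j<..m}.
      card ({\<eta> j..\<eta> j + \<tau> j} \<inter> {\<eta> r..<\<eta> r + \<tau> r}))"

definition hstat :: "nat \<Rightarrow> nat set \<Rightarrow> (nat \<Rightarrow> nat) \<Rightarrow> nat" where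
  "hstat n I \<eta> = card {(r,s). 1 \<le> r \<and> r < s \<and> s \<le> n \<and> r \<in> I \<and> s \<notin> I \<and> \<eta> s = \<eta> r + 1}"

definition rs_boxes :: "nat \<Rightarrow> (nat \<Rightarrow> int) \<Rightarrow> (nat \<Rightarrow> int) \<Rightarrow> (nat \<times> int) set" where
  "rs_boxes n \<alpha> \<beta> = {(j,i). j \<in> {1..n} \<and> \<alpha> j < i \<and> i \<le> \<beta> j}"

definition row_strict :: "nat \<Rightarrow> (nat \<Rightarrow> int) \<Rightarrow> (nat \<Rightarrow> int) \<Rightarrow> (nat \<times> int \<Rightarrow> nat) \<Rightarrow> bool" where
  "row_strict n \<alpha> \<beta> S \<longleftrightarrow>
     (\<forall>b\<in>rs_boxes n \<alpha> \<beta>. 1 \<le> S b) \<and> (\<forall>b. b \<notin> rs_boxes n \<alpha> \<beta> \<longrightarrow> S b = 0) \<and>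
     (\<forall>j i. (j,i) \<in> rs_boxes n \<alpha> \<beta> \<and> (j,i+1) \<in> rs_boxes n \<alpha> \<beta> \<longrightarrow> S (j,i) < S (j,i+1))"

text \<open>Increasing w0-triples: a triple is determined by v = (r,i), a box, and the row
j > r containing/adjacent to u = (j,i) and w = (j,i+1); this requires
alpha j <= i <= beta j.  u is adjacent to the left end iff i = alpha j (S(u) = -infinity),
w is adjacent to the right end iff i = beta j (S(w) = +infinity).\<close>
definition hw0 :: "nat \<Rightarrow> (nat \<Rightarrow> int) \<Rightarrow> (nat \<Rightarrow> int) \<Rightarrow> (nat \<times> int \<Rightarrow> nat) \<Rightarrow> nat" where
  "hw0 n \<alpha> \<beta> S = card {(r,j,i). (r,i) \<in> rs_boxes n \<alpha> \<beta> \<and> r < j \<and> j \<le> n \<and>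
       \<alpha> j \<le> i \<and> i \<le> \<beta> j \<and>
       (i = \<alpha> j \<or> S (j,i) < S (r,i)) \<and> (i = \<beta> j \<or> S (r,i) < S (j,i+1))}"

text \<open>Coefficient of x^mu (monomial prod_{k >= 1} x_k^(mu k)) in N_{beta/alpha}(X;q).\<close>
definition Ncoef :: "nat \<Rightarrow> (nat \<Rightarrow> int) \<Rightarrow> (nat \<Rightarrow> int) \<Rightarrow> (nat \<Rightarrow> nat) \<Rightarrow> 'a::field \<Rightarrow> 'a" where
  "Ncoef n \<alpha> \<beta> \<mu> q =
     (if \<exists>j\<in>{1..n}. \<alpha> j > \<beta> j then 0
      else (\<Sum>S\<in>{S. row_strict n \<alpha> \<beta> S \<and>
                   (\<forall>k\<ge>1. card {b\<in>rs_boxes n \<alpha> \<beta>. S b = k} = \<mu> k)}.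
              q ^ hw0 n \<alpha> \<beta> S))"

text \<open>Right-hand side data: alpha = (a,0) + eps_J, beta = (0,a) + (1^m) + tau, with a
indexed by [1,m-1] and tau by [1,m] (both zero elsewhere).\<close>
definition alphaJ :: "nat set \<Rightarrow> (nat \<Rightarrow> nat) \<Rightarrow> nat \<Rightarrow> int" where
  "alphaJ J a j = int (a j + (if j \<in> J then 1 else 0))"

definition betaT :: "(nat \<Rightarrow> nat) \<Rightarrow> (nat \<Rightarrow> nat) \<Rightarrow> nat \<Rightarrow> int" where
  "betaT a \<tau> j = int (a (j - 1) + 1 + \<tau> j)"

text \<open>Index set of the right-hand sum.  Terms with alpha_j > beta_j for some j vanish
by the convention N_{beta/alpha} = 0, so they are omitted (this makes the sum finite).\<close>
definition rhs_index :: "nat \<Rightarrow> nat \<Rightarrow> nat \<Rightarrow> (nat set \<times> (nat \<Rightarrow> nat) \<times> (nat \<Rightarrow> nat)) set" where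
  "rhs_index N m l = {(J,a,\<tau>). J \<subseteq> {1..m-1} \<and> card J = l \<and>
      (\<forall>i. i \<notin> {1..m-1} \<longrightarrow> a i = 0) \<and> (\<forall>i. i \<notin> {1..m} \<longrightarrow> \<tau> i = 0) \<and>
      (\<Sum>j=1..m. \<tau> j) = N - m \<and>
      (\<forall>j\<in>{1..m}. alphaJ J a j \<le> betaT a \<tau> j)}"

end

theory Submission
  imports Defs
begin

(* Taking the coefficient of z^(N-m) chooses a set K of N - m columns i with
   c_i = c_(i-1) + 1.  A pair (lambda, K) is the same as a pair (a, tau): the x-coordinates
   N + 1 - i of the unchosen columns, together with 0, are m vertical lines
   x = line 1 > ... > line m = 0 which carry all south steps of lambda; consecutive lines are
   tau_s + 1 apart, and a_s + line s is the number of south steps on the lines s+1, ..., m.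
   The area of lambda is the sum of the c_i; the chosen columns cancel against the factors
   t^(-c_i) and the unchosen ones contribute |a|, so the t-weight becomes t^|a|.
   Reading the south steps on line s from north to south gives row s of the row shape, a step
   of rowarea x - 1 being the box x.  A labelling becomes a row strict filling whose zeros sit
   in the first boxes of the rows of a set J; deleting these boxes leaves the shape
   ((0,a) + (1^m) + tau) / ((a,0) + eps_J).  Finally dinv is counted box by box against the
   boxes (j,x), (j,x+1) of the later rows j: these comparisons differ from the increasing
   w0-triples by a term depending only on the shape, which telescopes to d((0,a),tau), and by a
   term from the zero labels, which is h_J(a). *)

section \<open>Elementary symmetric functions and counting sums\<close>

lemma prod_monom:
  "finite A \<Longrightarrow> (\<Prod>x\<in>A. monom (c x) (n x)) = monom (\<Prod>x\<in>A. c x) (\<Sum>x\<in>A. n x)"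
  by (induction A rule: finite_induct) (simp_all add: mult_monom)

lemma coeff_prod_linear:
  fixes c :: "'b \<Rightarrow> 'a::comm_semiring_1"
  assumes "finite A"
  shows "coeff (\<Prod>x\<in>A. [:1, c x:]) d = (\<Sum>X\<in>{X. X \<subseteq> A \<and> card X = d}. \<Prod>x\<in>X. c x)"
proof -
  have "(\<Prod>x\<in>A. [:1, c x:]) = (\<Prod>x\<in>A. monom (c x) 1 + 1)"
    by (simp add: monom_Suc monom_0 one_pCons)
  also have "\<dots> = (\<Sum>X\<in>Pow A. \<Prod>x\<in>X. monom (c x) 1)"
    using assms by (simp add: prod_add)
  also have "\<dots> = (\<Sum>X\<in>Pow A. monom (\<Prod>x\<in>X. c x) (card X))"
    using assms by (intro sum.cong refl) (auto simp: prod_monom dest: finite_subset)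
  finally show ?thesis
    using assms by (simp add: coeff_sum sum.inter_filter[symmetric] Pow_def)
qed

lemma sum_subset_times:
  fixes h :: "'a \<times> 'b \<Rightarrow> 'c::comm_semiring_1"
  assumes "finite A" "finite B" "S \<subseteq> A \<times> B"
  shows "(\<Sum>c\<in>S. h c) = (\<Sum>x\<in>A. \<Sum>y\<in>B. of_bool ((x,y) \<in> S) * h (x,y))"
proof -
  have "(\<Sum>c\<in>S. h c) = (\<Sum>c\<in>(A \<times> B) \<inter> S. h c)" using assms(3) by (simp add: Int_absorb1)
  also have "\<dots> = (\<Sum>c\<in>A \<times> B. if c \<in> S then h c else 0)"
    by (rule sum.inter_restrict) (use assms in simp)
  also have "\<dots> = (\<Sum>(x,y)\<in>A \<times> B. of_bool ((x,y) \<in> S) * h (x,y))"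
    by (rule sum.cong) auto
  also have "\<dots> = (\<Sum>x\<in>A. \<Sum>y\<in>B. of_bool ((x,y) \<in> S) * h (x,y))"
    by (rule sum.cartesian_product[symmetric])
  finally show ?thesis .
qed

lemma card_subset_times:
  assumes "finite A" "finite B" "S \<subseteq> A \<times> B"
  shows "(of_nat (card S) :: 'c::comm_semiring_1) = (\<Sum>x\<in>A. \<Sum>y\<in>B. of_bool ((x,y) \<in> S))"
  using sum_subset_times[OF assms, of "\<lambda>_. 1"] by simp

lemma sum_telescope_prev:
  fixes f :: "nat \<Rightarrow> int"
  assumes "r \<le> m"
  shows "(\<Sum>j\<in>{r<..m}. f (j-1) - f j) = f r - f m"
proof -
  have "(\<Sum>j\<in>{r<..m}. f (j-1) - f j) = (\<Sum>i\<in>{r..<m}. f i - f (Suc i))"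
    by (rule sum.reindex_bij_witness[of _ Suc "\<lambda>j. j - 1"]) auto
  also have "\<dots> = f r - f m"
    using sum_Suc_diff'[OF assms, of "\<lambda>i. - f i"] by simp
  finally show ?thesis .
qed

lemma sum_triangle_swap:
  fixes f :: "nat \<Rightarrow> nat \<Rightarrow> 'a::comm_monoid_add"
  shows "(\<Sum>r=1..m. \<Sum>j\<in>{r<..m}. f r j) = (\<Sum>j=1..m. \<Sum>r\<in>{1..<j}. f r j)"
proof -
  have "{j\<in>{1..m}. r < j} = {r<..m}" if "r \<in> {1..m}" for r
    using that by auto
  then have "(\<Sum>r=1..m. \<Sum>j\<in>{r<..m}. f r j) = (\<Sum>r=1..m. \<Sum>j\<in>{j\<in>{1..m}. r < j}. f r j)"
    by simp
  also have "\<dots> = (\<Sum>j=1..m. \<Sum>r\<in>{r\<in>{1..m}. r < j}. f r j)"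
    by (rule sum.swap_restrict) auto
  also have "\<dots> = (\<Sum>j=1..m. \<Sum>r\<in>{1..<j}. f r j)"
    by (intro sum.cong refl) auto
  finally show ?thesis .
qed

lemma sum_of_bool_mem_mult:
  fixes g :: "'a \<Rightarrow> 'b::semiring_1"
  shows "finite X \<Longrightarrow> A \<subseteq> X \<Longrightarrow> (\<Sum>x\<in>X. of_bool (x \<in> A) * g x) = sum g A"
  by (simp add: Int_absorb1)

lemma int_eq_iff_Suc: "int p = int q + 1 \<longleftrightarrow> p = Suc q"
  by auto

lemma image_int_Suc_atLeastAtMost: "(\<lambda>y. int y + 1) ` {p..q} = {int p<..int q + 1}"
  by (auto intro!: image_eqI[where x = "nat (x - 1)" for x])

lemma image_int_Suc_atLeastLessThan: "(\<lambda>y. int y + 1) ` {p..<q} = {int p<..int q}"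
  by (auto intro!: image_eqI[where x = "nat (x - 1)" for x])

lemma finite_weighted_funs:
  assumes B: "finite B"
  shows "finite {S :: 'x \<Rightarrow> nat. (\<forall>b. b \<notin> B \<longrightarrow> S b = 0) \<and> (\<forall>k\<ge>1. card {b\<in>B. S b = k} = \<mu> k)}"
    (is "finite ?W")
proof (cases "?W = {}")
  case False
  then obtain S0 where S0: "S0 \<in> ?W" by blast
  \<comment> \<open>every S in ?W takes each nonzero value as often as S0 does, so its values lie in S0 ` B\<close>
  have "?W \<subseteq> {f. \<forall>x. (x \<in> B \<longrightarrow> f x \<in> insert 0 (S0 ` B)) \<and> (x \<notin> B \<longrightarrow> f x = 0)}"
  proof (intro subsetI CollectI allI conjI impI)
    fix S x assume S: "S \<in> ?W" and x: "x \<in> B"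
    show "S x \<in> insert 0 (S0 ` B)"
    proof (cases "S x = 0")
      case False
      then have "card {b\<in>B. S0 b = S x} = card {b\<in>B. S b = S x}" using S S0 by auto
      also have "\<dots> \<noteq> 0" using x B by auto
      finally show ?thesis by (metis (mono_tags, lifting) Collect_empty_eq card.empty image_eqI insertI2)
    qed simp
  qed auto
  moreover have "finite {f. \<forall>x. (x \<in> B \<longrightarrow> f x \<in> insert 0 (S0 ` B)) \<and> (x \<notin> B \<longrightarrow> f x = 0)}"
    by (rule finite_set_of_finite_funs) (use B in auto)
  ultimately show ?thesis by (rule finite_subset)
qed (metis finite.emptyI)

lemma ex_crossing:
  fixes f :: "nat \<Rightarrow> nat"
  assumes "i \<le> f 0" "f n < i"
  shows "\<exists>s\<in>{1..n}. f s < i \<and> i \<le> f (s - 1)"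
  using assms
proof (induction n)
  case (Suc n)
  then show ?case
    by (cases "f n < i") (auto intro: bexI[of _ "Suc n"] bexI[of _ n] dest: Suc.IH)
qed simp

lemma card_triples_by_fibres:
  assumes "finite C" "\<And>r. finite (B r)"
    and "T \<subseteq> {(r,j,x). (r,x) \<in> C \<and> j \<in> B r}"
  shows "card T = (\<Sum>(r,x)\<in>C. card {j\<in>B r. (r,j,x) \<in> T})"
proof -
  have "bij_betw (\<lambda>((r,x),j). (r,j,x)) (SIGMA c:C. {j\<in>B (fst c). (fst c, j, snd c) \<in> T}) T"
    by (rule bij_betw_byWitness[where f' = "\<lambda>(r,j,x). ((r,x),j)"]) (use assms(3) in auto)
  then have "card T = card (SIGMA c:C. {j\<in>B (fst c). (fst c, j, snd c) \<in> T})"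
    by (simp add: bij_betw_same_card)
  also have "\<dots> = (\<Sum>(r,x)\<in>C. card {j\<in>B r. (r,j,x) \<in> T})"
    using assms(1,2) by (subst card_SigmaI) (auto simp: case_prod_beta)
  finally show ?thesis .
qed

text \<open>The two dinv comparisons of a box v with u = (j,x) and w = (j,x+1) in a later row j,
  against the w0-triple (u,v,w).  When u and w both lie in row j then qu < qw, so
  [qu < qv] + [qv < qw] = 1 + [qu < qv < qw]; the other terms are boundary effects at the ends
  of row j and at a zero label in its first box.\<close>
lemma triple_count_identity:
  fixes aj bj x :: int and qv qu qw :: nat and inJ :: bool
  assumes "aj \<le> bj" and "inJ \<Longrightarrow> aj < bj"
    and "aj < x \<Longrightarrow> x \<le> bj \<Longrightarrow> (qu = 0 \<longleftrightarrow> inJ \<and> x = aj + 1)"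
    and "aj < x + 1 \<Longrightarrow> x + 1 \<le> bj \<Longrightarrow> (qw = 0 \<longleftrightarrow> inJ \<and> x = aj)"
    and "aj < x \<Longrightarrow> x + 1 \<le> bj \<Longrightarrow> qu < qw"
  shows "(of_bool (aj < x \<and> x \<le> bj \<and> qu < qv) + of_bool (aj < x + 1 \<and> x + 1 \<le> bj \<and> qv < qw) :: int)
    = of_bool (qv \<noteq> 0 \<and> aj + of_bool inJ \<le> x \<and> x \<le> bj \<and>
          (x = aj + of_bool inJ \<or> (if aj < x \<and> x \<le> bj then qu else 0) < qv) \<and>
          (x = bj \<or> qv < (if aj < x + 1 \<and> x + 1 \<le> bj then qw else 0)))
      + (of_bool (aj < x \<and> x < bj) - of_bool (x = aj \<and> aj = bj))
      + of_bool (qv = 0 \<and> \<not> inJ \<and> aj = x)"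
proof (cases inJ)
  case True
  then show ?thesis using assms by (cases "x = aj + 1"; cases "aj < x"; cases "x + 1 \<le> bj"; cases "x \<le> bj"; auto)
next
  case False
  then show ?thesis using assms by (cases "aj < x"; cases "x + 1 \<le> bj"; cases "x \<le> bj"; cases "x = aj"; auto)
qed

section \<open>Dyck paths through their columns\<close>

lemma dyck_below_diag: "e \<in> dyck N \<Longrightarrow> i \<in> {1..N} \<Longrightarrow> e i \<le> i - 1"
  unfolding dyck_def by auto

lemma dyck_outside: "e \<in> dyck N \<Longrightarrow> i \<notin> {1..N} \<Longrightarrow> e i = 0"
  unfolding dyck_def by auto

lemma dyck_mono:
  assumes "e \<in> dyck N" "1 \<le> i" "i \<le> i'" "i' \<le> N"
  shows "e i \<le> e i'"
  using assms(3,4)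
proof (induction rule: dec_induct)
  case (step n)
  then have "e n \<le> e (Suc n)" using assms(1,2) by (simp add: dyck_def)
  with step show ?case by simp
qed simp

lemma finite_dyck: "finite (dyck N)"
proof (rule finite_subset[OF _ finite_set_of_finite_funs[of "{1..N}" "{0..N}" 0]])
  show "dyck N \<subseteq> {f. \<forall>x. (x \<in> {1..N} \<longrightarrow> f x \<in> {0..N}) \<and> (x \<notin> {1..N} \<longrightarrow> f x = 0)}"
    using dyck_below_diag dyck_outside by fastforce
qed auto

lemma area_eq_sum_colarea:
  assumes e: "e \<in> dyck N"
  shows "area N e = (\<Sum>i=1..N. colarea N e i)"
proof -
  have row: "card {i\<in>{1..N}. N + 2 \<le> j + i \<and> e j + i \<le> N} = rowarea e j" if j: "j \<in> {1..N}" for j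
  proof -
    have "e j \<le> j - 1" using dyck_below_diag[OF e j] .
    then have "{i\<in>{1..N}. N + 2 \<le> j + i \<and> e j + i \<le> N} = {N+2-j..N - e j}"
      using j by (auto simp: le_diff_conv2)
    then show ?thesis using \<open>e j \<le> j - 1\<close> j by (simp add: rowarea_def, arith)
  qed
  have "(\<Sum>i=1..N. colarea N e i) = (\<Sum>i=1..N. \<Sum>j=1..N. of_bool (N + 2 \<le> j + i \<and> e j + i \<le> N))"
    by (simp add: colarea_def Int_def)
  also have "\<dots> = (\<Sum>j=1..N. \<Sum>i=1..N. of_bool (N + 2 \<le> j + i \<and> e j + i \<le> N))"
    by (rule sum.swap)
  also have "\<dots> = (\<Sum>j=1..N. rowarea e j)"
    using row by (simp add: Int_def)
  finally show ?thesis unfolding area_def by simp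
qed

definition rows_upto :: "nat \<Rightarrow> (nat \<Rightarrow> nat) \<Rightarrow> nat \<Rightarrow> nat" where
  "rows_upto N e x = card {i\<in>{1..N}. e i \<le> x}"

lemma rows_upto_eq:
  assumes e: "e \<in> dyck N"
  shows "{i\<in>{1..N}. e i \<le> x} = {1..rows_upto N e x}"
proof (cases "{i\<in>{1..N}. e i \<le> x} = {}")
  case False
  define u where "u = Max {i\<in>{1..N}. e i \<le> x}"
  have u: "u \<in> {1..N}" "e u \<le> x" using Max_in[OF _ False] unfolding u_def by auto
  have "{i\<in>{1..N}. e i \<le> x} = {1..u}"
    using Max_ge[of "{i\<in>{1..N}. e i \<le> x}"] u dyck_mono[OF e, of _ u] unfolding u_def[symmetric]
    by (fastforce intro: le_trans)
  then show ?thesis unfolding rows_upto_def by simp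
qed (simp add: rows_upto_def)

lemma rows_upto_mono: "x \<le> y \<Longrightarrow> rows_upto N e x \<le> rows_upto N e y"
  unfolding rows_upto_def by (rule card_mono) auto

lemma rows_upto_ge:
  assumes e: "e \<in> dyck N" and x: "x < N"
  shows "x + 1 \<le> rows_upto N e x"
proof -
  have "{1..x+1} \<subseteq> {i\<in>{1..N}. e i \<le> x}" using dyck_below_diag[OF e] x by fastforce
  from card_mono[OF _ this] show ?thesis unfolding rows_upto_def by simp
qed

lemma rows_upto_top:
  assumes e: "e \<in> dyck N" and x: "N \<le> x + 1"
  shows "rows_upto N e x = N"
proof -
  have "{i\<in>{1..N}. e i \<le> x} = {1..N}" using dyck_below_diag[OF e] x by fastforce
  then show ?thesis unfolding rows_upto_def by simp
qed

lemma le_rows_upto_iff: "e \<in> dyck N \<Longrightarrow> i \<in> {1..N} \<Longrightarrow> e i \<le> x \<longleftrightarrow> i \<le> rows_upto N e x"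
  using rows_upto_eq[of e N x] by (auto simp: set_eq_iff)

lemma colarea_eq_rows_upto:
  assumes e: "e \<in> dyck N" and i: "i \<in> {1..N}"
  shows "colarea N e i = rows_upto N e (N - i) - (N - i) - 1"
proof -
  have "{j\<in>{1..N}. N + 2 \<le> j + i \<and> e j + i \<le> N} = {j\<in>{1..N}. e j \<le> N - i} - {1..N-i+1}"
    using i by auto
  moreover have "{1..N-i+1} \<subseteq> {j\<in>{1..N}. e j \<le> N - i}"
    using i dyck_below_diag[OF e] by fastforce
  ultimately show ?thesis
    unfolding colarea_def rows_upto_def by (simp add: card_Diff_subset)
qed

lemma rows_upto_const_iff:
  assumes "1 \<le> x"
  shows "rows_upto N e (x - 1) = rows_upto N e x \<longleftrightarrow> (\<forall>i\<in>{1..N}. e i \<noteq> x)"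
proof -
  have "{i\<in>{1..N}. e i \<le> x} = {i\<in>{1..N}. e i \<le> x - 1} \<union> {i\<in>{1..N}. e i = x}"
    and "{i\<in>{1..N}. e i \<le> x - 1} \<inter> {i\<in>{1..N}. e i = x} = {}"
    using assms by auto
  then have "rows_upto N e x = rows_upto N e (x - 1) + card {i\<in>{1..N}. e i = x}"
    unfolding rows_upto_def by (simp add: card_Un_disjoint)
  then show ?thesis by auto
qed

text \<open>The columns i carrying a factor 1 + z t^(-c_i) on the left.\<close>
definition rise_cols :: "nat \<Rightarrow> (nat \<Rightarrow> nat) \<Rightarrow> nat set" where
  "rise_cols N e = {i\<in>{2..N}. colarea N e i = colarea N e (i - 1) + 1}"

lemma rise_cols_iff:
  assumes e: "e \<in> dyck N" and i: "i \<in> {2..N}"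
  shows "i \<in> rise_cols N e \<longleftrightarrow> rows_upto N e (N - i) = rows_upto N e (N - i + 1)"
proof -
  have c1: "colarea N e i = rows_upto N e (N - i) - (N - i) - 1"
    using colarea_eq_rows_upto[OF e] i by auto
  have "N - (i - 1) = N - i + 1" "i - 1 \<in> {1..N}" using i by auto
  then have c2: "colarea N e (i-1) = rows_upto N e (N - i + 1) - (N - i + 1) - 1"
    using colarea_eq_rows_upto[OF e, of "i - 1"] by simp
  have "N - i + 1 \<le> rows_upto N e (N - i)" "N - i + 2 \<le> rows_upto N e (N - i + 1)"
    using rows_upto_ge[OF e, of "N-i"] rows_upto_ge[OF e, of "N-i+1"] i by auto
  moreover have "rows_upto N e (N - i) \<le> rows_upto N e (N - i + 1)" by (rule rows_upto_mono) simp
  ultimately have "colarea N e i = colarea N e (i - 1) + 1 \<longleftrightarrow>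
      rows_upto N e (N - i) = rows_upto N e (N - i + 1)"
    using c1 c2 by linarith
  then show ?thesis using i unfolding rise_cols_def by simp
qed

lemma finite_rise_cols: "finite (rise_cols N e)"
  unfolding rise_cols_def by simp

section \<open>The Dyck path of a row shape\<close>

text \<open>The data (a, tau) of a summand on the right determine a Dyck path whose south steps lie on
  the m vertical lines x = line s, where line 0 = N, line m = 0 and consecutive lines are
  tau s + 1 apart.  The steps on line s form band s, the rows i with
  north_rows s < i <= north_rows (s - 1); the step in row x + line s of band s is the box x
  of row s of the row shape, and its rowarea is x - 1.\<close>

locale row_shape =
  fixes N m :: nat and a \<tau> :: "nat \<Rightarrow> nat"
  assumes m_pos: "1 \<le> m" and m_le: "m \<le> N"
    and a_outside: "\<And>i. i \<notin> {1..m-1} \<Longrightarrow> a i = 0"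
    and tau_outside: "\<And>i. i \<notin> {1..m} \<Longrightarrow> \<tau> i = 0"
    and tau_sum: "(\<Sum>j=1..m. \<tau> j) = N - m"
    and a_le: "\<And>j. j \<in> {1..m} \<Longrightarrow> a j \<le> a (j-1) + 1 + \<tau> j"
begin

definition line :: "nat \<Rightarrow> nat" where "line s = N - s - (\<Sum>t=1..s. \<tau> t)"
definition north_rows :: "nat \<Rightarrow> nat" where "north_rows s = a s + line s"
definition b :: "nat \<Rightarrow> nat" where "b s = a (s-1) + 1 + \<tau> s"

lemma a_0: "a 0 = 0" and a_m: "a m = 0"
  using a_outside m_pos by auto

lemma tau_partial_le: "s \<le> m \<Longrightarrow> s + (\<Sum>t=1..s. \<tau> t) \<le> N"
  using sum_mono2[of "{1..m}" "{1..s}" \<tau>] tau_sum m_le by auto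

lemma line_0: "line 0 = N" and line_m: "line m = 0"
  using tau_sum m_le by (auto simp: line_def)

lemma line_step: "s \<in> {1..m} \<Longrightarrow> line (s-1) = line s + 1 + \<tau> s"
  using tau_partial_le[of s] by (cases s) (auto simp: line_def)

lemma line_decrease: "s \<le> s' \<Longrightarrow> s' \<le> m \<Longrightarrow> line s' + (s' - s) \<le> line s"
  using sum_mono2[of "{1..s'}" "{1..s}" \<tau>] tau_partial_le[of s'] by (auto simp: line_def)

lemma line_strict: "s < s' \<Longrightarrow> s' \<le> m \<Longrightarrow> line s' < line s"
  using line_decrease[of s s'] by simp

lemma line_anti: "s \<le> s' \<Longrightarrow> s' \<le> m \<Longrightarrow> line s' \<le> line s"
  using line_decrease[of s s'] by simp

lemma line_le: "line s \<le> N"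
  unfolding line_def by simp

lemma line_inj: "s \<le> m \<Longrightarrow> s' \<le> m \<Longrightarrow> line s = line s' \<Longrightarrow> s = s'"
  using line_strict by (metis linorder_neqE_nat less_irrefl)

lemma inj_on_line: "inj_on line {0..m}"
  using line_inj by (auto simp: inj_on_def)

lemma line_range:
  assumes "s \<in> {1..m-1}"
  shows "line s \<in> {1..N-1}"
proof -
  have "0 < s" "s < m" using assms m_pos by auto
  then show ?thesis using line_strict[of 0 s] line_strict[of s m] line_0 line_m by auto
qed

lemma north_rows_0: "north_rows 0 = N" and north_rows_m: "north_rows m = 0"
  unfolding north_rows_def using a_0 a_m line_0 line_m by auto

lemma north_rows_step: "s \<in> {1..m} \<Longrightarrow> north_rows (s-1) = b s + line s"
  unfolding north_rows_def b_def using line_step by simp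

lemma north_rows_anti: "s \<le> s' \<Longrightarrow> s' \<le> m \<Longrightarrow> north_rows s' \<le> north_rows s"
proof (induction s' rule: dec_induct)
  case (step n)
  then have "north_rows (Suc n) \<le> north_rows n"
    using north_rows_step[of "Suc n"] a_le[of "Suc n"] by (simp add: north_rows_def b_def)
  with step show ?case by simp
qed simp

lemma north_rows_le: "s \<le> m \<Longrightarrow> north_rows s \<le> N"
  using north_rows_anti[of 0 s] north_rows_0 by simp

lemma a_le_b: "s \<in> {1..m} \<Longrightarrow> a s \<le> b s"
  using a_le unfolding b_def by simp

lemma b_line_le: "s \<in> {1..m} \<Longrightarrow> b s + line s \<le> N"
  using north_rows_step[of s] north_rows_le[of "s-1"] by force

lemma band_unique:
  assumes "s \<in> {1..m}" "north_rows s < i" "i \<le> north_rows (s-1)"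
    and "s' \<in> {1..m}" "north_rows s' < i" "i \<le> north_rows (s'-1)"
  shows "s = s'"
proof (rule ccontr)
  assume "s \<noteq> s'"
  then consider "s < s'" | "s' < s" by linarith
  then show False
  proof cases
    case 1
    then have "s \<le> s'-1" "s'-1 \<le> m" using assms by auto
    then have "north_rows (s'-1) \<le> north_rows s" by (rule north_rows_anti)
    then show False using assms by simp
  next
    case 2
    then have "s' \<le> s-1" "s-1 \<le> m" using assms by auto
    then have "north_rows (s-1) \<le> north_rows s'" by (rule north_rows_anti)
    then show False using assms by simp
  qed
qed

definition band :: "nat \<Rightarrow> nat" where
  "band i = (THE s. s \<in> {1..m} \<and> north_rows s < i \<and> i \<le> north_rows (s-1))"

lemma band_eq: "s \<in> {1..m} \<Longrightarrow> north_rows s < i \<Longrightarrow> i \<le> north_rows (s-1) \<Longrightarrow> band i = s"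
  unfolding band_def by (rule the_equality) (use band_unique in blast)+

lemma band_spec: "i \<in> {1..N} \<Longrightarrow> band i \<in> {1..m} \<and> north_rows (band i) < i \<and> i \<le> north_rows (band i - 1)"
  using ex_crossing[of i north_rows m] north_rows_0 north_rows_m band_eq by fastforce

lemma band_anti: "i \<in> {1..N} \<Longrightarrow> i' \<in> {1..N} \<Longrightarrow> i \<le> i' \<Longrightarrow> band i' \<le> band i"
  using band_spec[of i] band_spec[of i'] north_rows_anti[of "band i" "band i' - 1"] by fastforce

definition path :: "nat \<Rightarrow> nat" where
  "path i = (if i \<in> {1..N} then line (band i) else 0)"

lemma path_dyck: "path \<in> dyck N"
  unfolding dyck_def
proof (intro CollectI conjI ballI allI impI)
  fix i assume i: "i \<in> {1..N}"
  then show "path i \<le> i - 1"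
    using band_spec[OF i] unfolding path_def north_rows_def by auto
next
  fix i assume i: "i \<in> {1..<N}"
  then have "band (Suc i) \<le> band i" "band i \<le> m" using band_anti[of i "Suc i"] band_spec[of i] by auto
  then show "path i \<le> path (Suc i)" using i line_anti unfolding path_def by auto
qed (auto simp: path_def)

lemma path_zero_iff: "i \<in> {1..N} \<Longrightarrow> path i = 0 \<longleftrightarrow> band i = m"
  using band_spec[of i] line_inj[of "band i" m] line_m unfolding path_def by auto

definition cells :: "(nat \<times> int) set" where
  "cells = {(s,x). s \<in> {1..m} \<and> int (a s) < x \<and> x \<le> int (b s)}"

definition row_of :: "nat \<times> int \<Rightarrow> nat" where
  "row_of c = nat (snd c) + line (fst c)"

definition cell_of :: "nat \<Rightarrow> nat \<times> int" where
  "cell_of i = (band i, int i - int (line (band i)))"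

lemma finite_cells: "finite cells"
  by (rule finite_subset[of _ "{1..m} \<times> {0..int N}"]) (use b_line_le in \<open>force simp: cells_def\<close>)+

lemma row_of_band: "(s,x) \<in> cells \<Longrightarrow> north_rows s < row_of (s,x) \<and> row_of (s,x) \<le> north_rows (s-1)"
  unfolding cells_def row_of_def using north_rows_step[of s] by (auto simp: north_rows_def)

lemma band_row_of: "(s,x) \<in> cells \<Longrightarrow> band (row_of (s,x)) = s"
  using row_of_band band_eq unfolding cells_def by auto

lemma row_of_range: "c \<in> cells \<Longrightarrow> row_of c \<in> {1..N}"
  using row_of_band[of "fst c" "snd c"] north_rows_le[of "fst c - 1"] by (force simp: cells_def)

lemma path_row_of: "(s,x) \<in> cells \<Longrightarrow> path (row_of (s,x)) = line s"
  using band_row_of row_of_range unfolding path_def by auto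

lemma cell_of_range: "i \<in> {1..N} \<Longrightarrow> cell_of i \<in> cells"
  using band_spec[of i] north_rows_step[of "band i"] unfolding cell_of_def cells_def north_rows_def by auto

lemma row_of_cell_of: "i \<in> {1..N} \<Longrightarrow> row_of (cell_of i) = i"
  using band_spec[of i] unfolding cell_of_def row_of_def north_rows_def by auto

lemma cell_of_row_of: "c \<in> cells \<Longrightarrow> cell_of (row_of c) = c"
  using band_row_of[of "fst c" "snd c"] by (auto simp: cell_of_def row_of_def cells_def)

lemma bij_row_of: "bij_betw row_of cells {1..N}"
  by (rule bij_betw_byWitness[of _ cell_of]) (use cell_of_row_of row_of_cell_of row_of_range cell_of_range in auto)

lemma card_rows: "card {i\<in>{1..N}. R i} = card {c\<in>cells. R (row_of c)}"
proof -
  have "bij_betw row_of {c\<in>cells. R (row_of c)} {i\<in>{1..N}. R i}"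
    using bij_row_of by (auto simp: bij_betw_def inj_on_def image_iff cell_of_row_of row_of_cell_of
        intro: cell_of_range dest: row_of_range)
  then show ?thesis by (simp add: bij_betw_same_card)
qed

lemma rowarea_row_of: "(s,x) \<in> cells \<Longrightarrow> int (rowarea path (row_of (s,x))) = x - 1"
  using path_row_of[of s x] unfolding rowarea_def row_of_def cells_def by auto


lemma path_le_iff:
  assumes i: "i \<in> {1..N}" and s: "s \<in> {1..m}" and x: "line s \<le> x" "x < line (s-1)"
  shows "path i \<le> x \<longleftrightarrow> s \<le> band i"
proof
  assume le: "path i \<le> x"
  show "s \<le> band i"
  proof (rule ccontr)
    assume "\<not> s \<le> band i"
    then have "band i \<le> s - 1" "s - 1 \<le> m" using s by auto
    from line_anti[OF this] show False using le x i unfolding path_def by simp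
  qed
next
  assume "s \<le> band i"
  from line_anti[OF this] show "path i \<le> x" using band_spec[OF i] x i unfolding path_def by simp
qed

lemma le_band_iff:
  assumes i: "i \<in> {1..N}" and s: "s \<in> {1..m}"
  shows "s \<le> band i \<longleftrightarrow> i \<le> north_rows (s-1)"
proof
  assume "s \<le> band i"
  then have "s - 1 \<le> band i - 1" "band i - 1 \<le> m" using band_spec[OF i] by auto
  from north_rows_anti[OF this] show "i \<le> north_rows (s-1)" using band_spec[OF i] by simp
next
  assume le: "i \<le> north_rows (s-1)"
  show "s \<le> band i"
  proof (rule ccontr)
    assume "\<not> s \<le> band i"
    then have "band i \<le> s - 1" "s - 1 \<le> m" using s by auto
    from north_rows_anti[OF this] show False using le band_spec[OF i] by simp
  qed
qed

lemma rows_upto_path: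
  assumes s: "s \<in> {1..m}" and x: "line s \<le> x" "x < line (s-1)"
  shows "rows_upto N path x = north_rows (s-1)"
proof -
  have "north_rows (s-1) \<le> N" using north_rows_le[of "s-1"] s by (simp add: le_diff_conv)
  then have "{i\<in>{1..N}. path i \<le> x} = {1..north_rows (s-1)}"
    using path_le_iff[OF _ s x] le_band_iff[OF _ s] by auto
  then show ?thesis unfolding rows_upto_def by simp
qed

definition free_cols :: "nat set" where
  "free_cols = {i\<in>{2..N}. N + 1 - i \<notin> line ` {1..m-1}}"

lemma free_cols_rise: "free_cols \<subseteq> rise_cols N path"
proof
  fix i assume i: "i \<in> free_cols"
  then have i2: "i \<in> {2..N}" and nk: "N + 1 - i \<notin> line ` {1..m-1}" unfolding free_cols_def by auto
  have "path j \<noteq> N + 1 - i" if j: "j \<in> {1..N}" for j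
  proof -
    show ?thesis
    proof (cases "band j = m")
      case True
      then show ?thesis using line_m i2 j unfolding path_def by simp
    next
      case False
      then have "band j \<in> {1..m-1}" using band_spec[OF j] by auto
      then show ?thesis using nk j unfolding path_def by (metis image_eqI)
    qed
  qed
  then have "rows_upto N path (N - i) = rows_upto N path (N - i + 1)"
    using rows_upto_const_iff[of "N + 1 - i" N path] i2 by (simp add: Suc_diff_le)
  then show "i \<in> rise_cols N path" using rise_cols_iff[OF path_dyck i2] by simp
qed

lemma card_free_cols: "card free_cols = N - m"
proof -
  have img: "free_cols = (\<lambda>x. N + 1 - x) ` ({1..N-1} - line ` {1..m-1})"
  proof (intro equalityI subsetI)
    fix i assume "i \<in> free_cols"
    then have "N + 1 - i \<in> {1..N-1} - line ` {1..m-1}" "i = N + 1 - (N + 1 - i)"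
      unfolding free_cols_def by auto
    then show "i \<in> (\<lambda>x. N + 1 - x) ` ({1..N-1} - line ` {1..m-1})" by blast
  next
    fix i assume "i \<in> (\<lambda>x. N + 1 - x) ` ({1..N-1} - line ` {1..m-1})"
    then obtain x where "x \<in> {1..N-1}" "x \<notin> line ` {1..m-1}" "i = N + 1 - x" by auto
    then show "i \<in> free_cols" unfolding free_cols_def by auto
  qed
  have "inj_on (\<lambda>x. N + 1 - x) ({1..N-1} - line ` {1..m-1})" by (auto simp: inj_on_def)
  then have "card free_cols = card ({1..N-1} - line ` {1..m-1})" unfolding img by (rule card_image)
  also have "\<dots> = (N - 1) - (m - 1)"
    using inj_on_subset[OF inj_on_line, of "{1..m-1}"] line_range
    by (subst card_Diff_subset) (auto simp: card_image)
  finally show ?thesis using m_pos m_le by simp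
qed

lemma compl_free_cols: "{1..N} - free_cols = (\<lambda>s. N + 1 - line s) ` {0..m-1}"
proof (intro equalityI subsetI)
  fix i assume i: "i \<in> {1..N} - free_cols"
  show "i \<in> (\<lambda>s. N + 1 - line s) ` {0..m-1}"
  proof (cases "i = 1")
    case True
    then show ?thesis using line_0 by (auto intro: image_eqI[of _ _ 0])
  next
    case False
    then obtain s where s: "s \<in> {1..m-1}" "N + 1 - i = line s" using i unfolding free_cols_def by auto
    then show ?thesis using i by (auto intro: image_eqI[of _ _ s])
  qed
next
  fix i assume "i \<in> (\<lambda>s. N + 1 - line s) ` {0..m-1}"
  then obtain s where s: "s \<in> {0..m-1}" "i = N + 1 - line s" by auto
  show "i \<in> {1..N} - free_cols"
  proof (cases "s = 0")
    case True then show ?thesis using s line_0 m_pos m_le unfolding free_cols_def by auto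
  next
    case False
    then have "s \<in> {1..m-1}" using s by auto
    then show ?thesis using s line_range[of s] unfolding free_cols_def by force
  qed
qed

lemma colarea_line: "s \<in> {0..m-1} \<Longrightarrow> colarea N path (N + 1 - line s) = a s"
proof (cases "s = 0")
  case True
  have "colarea N path 1 = rows_upto N path (N - 1) - (N - 1) - 1"
    using colarea_eq_rows_upto[OF path_dyck, of 1] m_pos m_le by simp
  then show ?thesis using True rows_upto_top[OF path_dyck] line_0 a_0 m_pos m_le by simp
next
  case False
  assume "s \<in> {0..m-1}"
  then have s: "s \<in> {1..m-1}" "Suc s \<in> {1..m}" using False by auto
  have ks: "line s \<in> {1..N-1}" using line_range[OF s(1)] .
  have "line (Suc s) < line s" using line_strict[of s "Suc s"] s by simp
  then have "rows_upto N path (line s - 1) = north_rows s"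
    using rows_upto_path[OF s(2), of "line s - 1"] ks by simp
  moreover have "N - (N + 1 - line s) = line s - 1" "N + 1 - line s \<in> {1..N}" using ks by auto
  then have "colarea N path (N + 1 - line s) = rows_upto N path (line s - 1) - (line s - 1) - 1"
    using colarea_eq_rows_upto[OF path_dyck, of "N + 1 - line s"] by simp
  ultimately show ?thesis unfolding north_rows_def using ks by simp
qed

lemma area_free_cols_weight:
  fixes t :: "'f::field"
  assumes t: "t \<noteq> 0"
  shows "t ^ area N path * (\<Prod>i\<in>free_cols. inverse (t ^ colarea N path i)) = t ^ (\<Sum>i=1..m-1. a i)"
proof -
  have "free_cols \<subseteq> {1..N}" unfolding free_cols_def by auto
  then have area: "area N path = (\<Sum>i\<in>free_cols. colarea N path i) + (\<Sum>i\<in>{1..N} - free_cols. colarea N path i)"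
    using area_eq_sum_colarea[OF path_dyck] sum.subset_diff[of free_cols "{1..N}"] by (simp add: add.commute)
  have "inj_on (\<lambda>s. N + 1 - line s) {0..m-1}"
  proof (rule inj_onI)
    fix s s' assume s: "s \<in> {0..m-1}" "s' \<in> {0..m-1}" "N + 1 - line s = N + 1 - line s'"
    have "line s = line s'" using s(3) line_le[of s] line_le[of s'] by simp
    then show "s = s'" using line_inj s by auto
  qed
  then have "(\<Sum>i\<in>{1..N} - free_cols. colarea N path i) = (\<Sum>s\<in>{0..m-1}. colarea N path (N + 1 - line s))"
    unfolding compl_free_cols by (simp add: sum.reindex)
  also have "\<dots> = (\<Sum>s\<in>{0..m-1}. a s)"
    by (intro sum.cong refl colarea_line)
  also have "\<dots> = (\<Sum>s=1..m-1. a s)"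
    using sum.atLeast_Suc_atMost[of 0 "m-1" a] a_0 by simp
  finally have rest: "(\<Sum>i\<in>{1..N} - free_cols. colarea N path i) = (\<Sum>s=1..m-1. a s)" .
  have "(\<Prod>i\<in>free_cols. inverse (t ^ colarea N path i)) = inverse (t ^ (\<Sum>i\<in>free_cols. colarea N path i))"
    using prod_inversef[of "\<lambda>i. t ^ colarea N path i" free_cols] by (simp add: power_sum comp_def)
  then show ?thesis unfolding area rest power_add using t by simp
qed


section \<open>The decomposition of dinv\<close>

lemma cells_Sigma: "cells = Sigma {1..m} (\<lambda>r. {int (a r)<..int (b r)})"
  unfolding cells_def by auto

lemma sum_cells: "(\<Sum>c\<in>cells. f c) = (\<Sum>r=1..m. \<Sum>x\<in>{int (a r)<..int (b r)}. f (r,x))"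
  unfolding cells_Sigma by (simp add: sum.Sigma)

definition gap :: "int \<Rightarrow> nat \<Rightarrow> int" where
  "gap x j = of_bool (int (a j) < x \<and> x < int (b j)) - of_bool (x = int (a j) \<and> a j = b j)"

definition overlap :: "int \<Rightarrow> nat \<Rightarrow> int" where
  "overlap x j = of_bool (x \<in> {int (a (j-1))<..int (b j) - 1})"

lemma gap_minus_overlap:
  "j \<in> {1..m} \<Longrightarrow> gap x j - overlap x j = of_bool (x \<le> int (a (j-1))) - of_bool (x \<le> int (a j))"
  using a_le[of j] unfolding gap_def overlap_def b_def by auto

lemma sum_gap_eq_sum_overlap:
  assumes "(r,x) \<in> cells"
  shows "(\<Sum>j\<in>{r<..m}. gap x j) = (\<Sum>j\<in>{r<..m}. overlap x j)"
proof -
  have r: "r \<le> m" "int (a r) < x" using assms unfolding cells_def by auto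
  have "(\<Sum>j\<in>{r<..m}. gap x j - overlap x j) = (\<Sum>j\<in>{r<..m}. of_bool (x \<le> int (a (j-1))) - of_bool (x \<le> int (a j)))"
    by (rule sum.cong) (use gap_minus_overlap in auto)
  also have "\<dots> = 0"
    using sum_telescope_prev[OF r(1), of "\<lambda>j. of_bool (x \<le> int (a j))"] r a_m by simp
  finally show ?thesis by (simp add: sum_subtractf)
qed

lemma dstat_as_sum:
  "int (dstat m (\<lambda>j. a (j-1)) \<tau>) = (\<Sum>r=1..m. \<Sum>j\<in>{r<..m}. \<Sum>x\<in>{int (a (r-1))<..int (b r)}. overlap x j)"
proof -
  have "int (card ({a (r-1)..a (r-1) + \<tau> r} \<inter> {a (j-1)..<a (j-1) + \<tau> j})) =
      (\<Sum>x\<in>{int (a (r-1))<..int (b r)}. overlap x j)" for r j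
  proof -
    let ?f = "\<lambda>y. int y + 1"
    have inj: "inj ?f" by (auto simp: inj_def)
    have "card ({a (r-1)..a (r-1) + \<tau> r} \<inter> {a (j-1)..<a (j-1) + \<tau> j})
        = card (?f ` ({a (r-1)..a (r-1) + \<tau> r} \<inter> {a (j-1)..<a (j-1) + \<tau> j}))"
      by (rule card_image[symmetric]) (simp add: inj_on_def)
    also have "\<dots> = card ({int (a (r-1))<..int (b r)} \<inter> {int (a (j-1))<..int (b j) - 1})"
      unfolding image_Int[OF inj] image_int_Suc_atLeastAtMost image_int_Suc_atLeastLessThan
      by (simp add: b_def ac_simps)
    finally show ?thesis unfolding overlap_def by (simp add: Int_def)
  qed
  then show ?thesis unfolding dstat_def by simp
qed

lemma overlap_shift_telescope:
  assumes j: "j \<in> {1..m}"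
  shows "overlap x j * (\<Sum>r\<in>{1..<j}. of_bool (int (a r) < x) - of_bool (int (a (r-1)) < x)) = 0"
proof -
  define g where "g r = (of_bool (int (a r) < x) :: int)" for r
  have "(\<Sum>r\<in>{1..<j}. g r - g (r-1)) = (\<Sum>i\<in>{0..<j-1}. g (Suc i) - g i)"
    by (rule sum.reindex_bij_witness[of _ Suc "\<lambda>r. r - 1"]) (use j in auto)
  also have "\<dots> = g (j-1) - g 0"
    by (rule sum_Suc_diff') simp
  finally show ?thesis using a_0 unfolding overlap_def g_def by auto
qed

text \<open>Moving the left end of row r from a r to a (r - 1) does not change the sum: the
  differences telescope over the rows r < j to the indicator of a (j - 1) < x <= a 0 = 0.\<close>
lemma sum_overlap_shift:
  "(\<Sum>r=1..m. \<Sum>j\<in>{r<..m}. \<Sum>x\<in>{int (a r)<..int (b r)}. overlap x j) =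
   (\<Sum>r=1..m. \<Sum>j\<in>{r<..m}. \<Sum>x\<in>{int (a (r-1))<..int (b r)}. overlap x j)"
proof -
  define X where "X = {0..int N + 1}"
  define w where "w r x = (of_bool (int (a r) < x) - of_bool (int (a (r-1)) < x) :: int)" for r x
  have diff: "(\<Sum>x\<in>{int (a r)<..int (b r)}. overlap x j) - (\<Sum>x\<in>{int (a (r-1))<..int (b r)}. overlap x j)
      = (\<Sum>x\<in>X. w r x * overlap x j)" if r: "r \<in> {1..m}" for r j
  proof -
    have "{int (a r)<..int (b r)} \<subseteq> X" "{int (a (r-1))<..int (b r)} \<subseteq> X"
      using b_line_le[OF r] unfolding X_def by auto
    then have "(\<Sum>x\<in>{int (a r)<..int (b r)}. overlap x j) - (\<Sum>x\<in>{int (a (r-1))<..int (b r)}. overlap x j)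
        = (\<Sum>x\<in>X. (of_bool (x \<in> {int (a r)<..int (b r)}) - of_bool (x \<in> {int (a (r-1))<..int (b r)})) * overlap x j)"
      by (simp only: left_diff_distrib sum_subtractf sum_of_bool_mem_mult[OF finite_atLeastAtMost_int[of 0 "int N + 1", folded X_def]])
    also have "\<dots> = (\<Sum>x\<in>X. w r x * overlap x j)"
      using a_le_b[OF r] a_le[OF r] by (intro sum.cong refl) (auto simp: w_def b_def)
    finally show ?thesis .
  qed
  have "(\<Sum>r=1..m. \<Sum>j\<in>{r<..m}. \<Sum>x\<in>{int (a r)<..int (b r)}. overlap x j) -
        (\<Sum>r=1..m. \<Sum>j\<in>{r<..m}. \<Sum>x\<in>{int (a (r-1))<..int (b r)}. overlap x j)
      = (\<Sum>r=1..m. \<Sum>j\<in>{r<..m}. \<Sum>x\<in>X. w r x * overlap x j)"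
    using diff by (simp add: sum_subtractf[symmetric])
  also have "\<dots> = (\<Sum>j=1..m. \<Sum>r\<in>{1..<j}. \<Sum>x\<in>X. w r x * overlap x j)"
    by (rule sum_triangle_swap)
  also have "\<dots> = (\<Sum>j=1..m. \<Sum>x\<in>X. overlap x j * (\<Sum>r\<in>{1..<j}. w r x))"
    by (intro sum.cong refl, subst sum.swap) (simp add: sum_distrib_left mult.commute)
  also have "\<dots> = 0"
    unfolding w_def by (intro sum.neutral ballI overlap_shift_telescope)
  finally show ?thesis by simp
qed

lemma sum_gap_eq_dstat:
  "(\<Sum>(r,x)\<in>cells. \<Sum>j\<in>{r<..m}. gap x j) = int (dstat m (\<lambda>j. a (j - 1)) \<tau>)"
proof -
  have "(\<Sum>(r,x)\<in>cells. \<Sum>j\<in>{r<..m}. gap x j) = (\<Sum>(r,x)\<in>cells. \<Sum>j\<in>{r<..m}. overlap x j)"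
    by (intro sum.cong refl) (auto simp: sum_gap_eq_sum_overlap)
  also have "\<dots> = (\<Sum>r=1..m. \<Sum>x\<in>{int (a r)<..int (b r)}. \<Sum>j\<in>{r<..m}. overlap x j)"
    by (simp add: sum_cells)
  also have "\<dots> = (\<Sum>r=1..m. \<Sum>j\<in>{r<..m}. \<Sum>x\<in>{int (a r)<..int (b r)}. overlap x j)"
    by (intro sum.cong refl sum.swap)
  also have "\<dots> = int (dstat m (\<lambda>j. a (j - 1)) \<tau>)"
    unfolding sum_overlap_shift dstat_as_sum ..
  finally show ?thesis .
qed

lemma hstat_as_sum:
  assumes "J \<subseteq> {1..m-1}"
  shows "hstat (m-1) J a = (\<Sum>r\<in>J. card {j\<in>{r<..m}. j \<notin> J \<and> a j = a r + 1})"
proof -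
  have "s \<le> m - 1 \<longleftrightarrow> s \<le> m" if "a s = a r + 1" for r s
    using a_m that by (cases "s = m") auto
  moreover have "r \<in> J \<Longrightarrow> 1 \<le> r" for r
    using assms by auto
  ultimately have "{(r,s). 1 \<le> r \<and> r < s \<and> s \<le> m-1 \<and> r \<in> J \<and> s \<notin> J \<and> a s = a r + 1}
      = (SIGMA r:J. {j\<in>{r<..m}. j \<notin> J \<and> a j = a r + 1})"
    by auto
  then show ?thesis
    unfolding hstat_def using finite_subset[OF assms] by (simp add: card_SigmaI)
qed

definition zero_rows :: "(nat \<Rightarrow> nat) \<Rightarrow> nat set" where
  "zero_rows P = {s\<in>{1..m-1}. a s < b s \<and> P (row_of (s, int (a s) + 1)) = 0}"

definition filling :: "(nat \<Rightarrow> nat) \<Rightarrow> nat \<times> int \<Rightarrow> nat" where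
  "filling P c = (if c \<in> cells then P (row_of c) else 0)"

definition labelling :: "(nat \<times> int \<Rightarrow> nat) \<Rightarrow> nat \<Rightarrow> nat" where
  "labelling S i = (if i \<in> {1..N} then S (cell_of i) else 0)"

lemma zero_rows_sub: "zero_rows P \<subseteq> {1..m-1}"
  unfolding zero_rows_def by auto

lemma zero_rows_less: "s \<in> zero_rows P \<Longrightarrow> a s < b s"
  unfolding zero_rows_def by auto

lemma shape_boxes:
  "rs_boxes m (alphaJ J a) (betaT a \<tau>) = {c\<in>cells. \<not> (fst c \<in> J \<and> snd c = int (a (fst c)) + 1)}"
  unfolding rs_boxes_def cells_def alphaJ_def betaT_def b_def by auto

lemma row_of_less_iff:
  assumes c: "(s,x) \<in> cells" and c': "(s',x') \<in> cells" and xx: "x = x' \<or> x = x' + 1"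
  shows "row_of (s,x) < row_of (s',x') \<longleftrightarrow> s' < s"
proof -
  note b1 = row_of_band[OF c] and b2 = row_of_band[OF c']
  have sm: "s \<in> {1..m}" "s' \<in> {1..m}" using c c' unfolding cells_def by auto
  consider "s' < s" | "s = s'" | "s < s'" by linarith
  then show ?thesis
  proof cases
    case 1
    then have "s' \<le> s-1" "s-1 \<le> m" using sm by auto
    from north_rows_anti[OF this] show ?thesis using 1 b1 b2 by simp
  next
    case 2
    have "x > 0" "x' > 0" using c c' unfolding cells_def by auto
    then show ?thesis using 2 xx unfolding row_of_def by auto
  next
    case 3
    then have "s \<le> s'-1" "s'-1 \<le> m" using sm by auto
    from north_rows_anti[OF this] show ?thesis using 3 b1 b2 by simp
  qed
qed

end

locale labelled_shape = row_shape +
  fixes P :: "nat \<Rightarrow> nat"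
  assumes P_inc: "\<And>i. i \<in> {1..<N} \<Longrightarrow> path i = path (Suc i) \<Longrightarrow> P i < P (Suc i)"
    and P_nonzero: "\<And>i. i \<in> {1..N} \<Longrightarrow> path i = 0 \<Longrightarrow> P i \<noteq> 0"
begin

definition lab :: "nat \<times> int \<Rightarrow> nat" where "lab c = P (row_of c)"

lemma lab_strict: "(s,x) \<in> cells \<Longrightarrow> (s,x+1) \<in> cells \<Longrightarrow> lab (s,x) < lab (s,x+1)"
proof -
  assume c: "(s,x) \<in> cells" "(s,x+1) \<in> cells"
  have "x > 0" using c unfolding cells_def by auto
  then have next_row: "row_of (s,x+1) = Suc (row_of (s,x))" unfolding row_of_def by (simp add: nat_add_distrib)
  then have "row_of (s,x) \<in> {1..<N}" using row_of_range[OF c(1)] row_of_range[OF c(2)] by auto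
  moreover have "path (row_of (s,x)) = path (Suc (row_of (s,x)))"
    using path_row_of[OF c(1)] path_row_of[OF c(2)] next_row by simp
  ultimately show ?thesis unfolding lab_def using P_inc next_row by simp
qed

lemma lab_zero_iff:
  assumes c: "(s,x) \<in> cells"
  shows "lab (s,x) = 0 \<longleftrightarrow> s \<in> zero_rows P \<and> x = int (a s) + 1"
proof
  assume q: "lab (s,x) = 0"
  have x1: "x = int (a s) + 1"
  proof (rule ccontr)
    assume "x \<noteq> int (a s) + 1"
    then have "(s, x-1) \<in> cells" using c unfolding cells_def by auto
    then have "lab (s,x-1) < lab (s,x)" using lab_strict[of s "x-1"] c by simp
    then show False using q by simp
  qed
  have "s \<noteq> m"
  proof
    assume "s = m"
    then have "path (row_of (s,x)) = 0" using path_row_of[OF c] line_m by simp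
    then show False using P_nonzero[OF row_of_range[OF c]] q unfolding lab_def by simp
  qed
  then show "s \<in> zero_rows P \<and> x = int (a s) + 1"
    using c x1 q unfolding zero_rows_def cells_def lab_def by auto
next
  assume "s \<in> zero_rows P \<and> x = int (a s) + 1"
  then show "lab (s,x) = 0" unfolding zero_rows_def lab_def by simp
qed

lemma boxes_eq: "rs_boxes m (alphaJ (zero_rows P) a) (betaT a \<tau>) = {c\<in>cells. lab c \<noteq> 0}"
proof (rule set_eqI)
  fix c
  show "c \<in> rs_boxes m (alphaJ (zero_rows P) a) (betaT a \<tau>) \<longleftrightarrow> c \<in> {c\<in>cells. lab c \<noteq> 0}"
    unfolding shape_boxes using lab_zero_iff[of "fst c" "snd c"] by auto
qed

lemma zero_cells: "{c\<in>cells. lab c = 0} = (\<lambda>s. (s, int (a s) + 1)) ` zero_rows P"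
proof (intro equalityI subsetI)
  fix c assume "c \<in> {c\<in>cells. lab c = 0}"
  then have "fst c \<in> zero_rows P" "c = (fst c, int (a (fst c)) + 1)"
    using lab_zero_iff[of "fst c" "snd c"] by (auto simp: prod_eq_iff)
  then show "c \<in> (\<lambda>s. (s, int (a s) + 1)) ` zero_rows P"
    using image_eqI[of c "\<lambda>s. (s, int (a s) + 1)" "fst c"] by simp
next
  fix c assume "c \<in> (\<lambda>s. (s, int (a s) + 1)) ` zero_rows P"
  then obtain s where s: "s \<in> zero_rows P" "c = (s, int (a s) + 1)" by auto
  then have "(s, int (a s) + 1) \<in> cells" unfolding zero_rows_def cells_def by auto
  then show "c \<in> {c\<in>cells. lab c = 0}" using s lab_zero_iff[of s "int (a s) + 1"] by simp
qed

definition dinv_pairs :: "(nat \<times> nat) set" where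
  "dinv_pairs = {(i,j). i \<in> {1..N} \<and> j \<in> {1..N} \<and> i < j \<and>
      ((rowarea path i = rowarea path j \<and> P i < P j) \<or> (rowarea path i = rowarea path j + 1 \<and> P i > P j))}"

lemma dinv_pairs_cells_iff:
  assumes c: "(s,x) \<in> cells" and c': "(s',x') \<in> cells"
  shows "(row_of (s,x), row_of (s',x')) \<in> dinv_pairs \<longleftrightarrow>
     s' < s \<and> ((x = x' \<and> lab (s,x) < lab (s',x')) \<or> (x = x' + 1 \<and> lab (s',x') < lab (s,x)))"
proof -
  have "int (rowarea path (row_of (s,x))) = x - 1" "int (rowarea path (row_of (s',x'))) = x' - 1"
    using rowarea_row_of[OF c] rowarea_row_of[OF c'] .
  then have "rowarea path (row_of (s,x)) = rowarea path (row_of (s',x')) \<longleftrightarrow> x = x'"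
    and "rowarea path (row_of (s,x)) = rowarea path (row_of (s',x')) + 1 \<longleftrightarrow> x = x' + 1"
    by linarith+
  then show ?thesis
    unfolding dinv_pairs_def lab_def using row_of_range[OF c] row_of_range[OF c'] row_of_less_iff[OF c c']
    by auto
qed

definition dinv_cnt :: "nat \<Rightarrow> int \<Rightarrow> nat \<Rightarrow> int" where
  "dinv_cnt r x j = of_bool ((j,x) \<in> cells \<and> lab (j,x) < lab (r,x))
     + of_bool ((j,x+1) \<in> cells \<and> lab (r,x) < lab (j,x+1))"

lemma card_dinv_pairs_with:
  assumes c': "(r,y) \<in> cells"
  shows "int (card {c\<in>cells. (row_of c, row_of (r,y)) \<in> dinv_pairs}) = (\<Sum>j\<in>{r<..m}. dinv_cnt r y j)"
proof -
  define A where "A = {j\<in>{r<..m}. (j,y) \<in> cells \<and> lab (j,y) < lab (r,y)}"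
  define B where "B = {j\<in>{r<..m}. (j,y+1) \<in> cells \<and> lab (r,y) < lab (j,y+1)}"
  have "{c\<in>cells. (row_of c, row_of (r,y)) \<in> dinv_pairs} = (\<lambda>j. (j,y)) ` A \<union> (\<lambda>j. (j,y+1)) ` B"
    using dinv_pairs_cells_iff[OF _ c'] unfolding A_def B_def by (auto simp: cells_def)
  moreover have "(\<lambda>j. (j,y)) ` A \<inter> (\<lambda>j. (j,y+1)) ` B = {}" by auto
  ultimately have "card {c\<in>cells. (row_of c, row_of (r,y)) \<in> dinv_pairs} = card A + card B"
    by (simp add: card_Un_disjoint card_image inj_on_def A_def B_def)
  then show ?thesis
    unfolding dinv_cnt_def A_def B_def by (simp add: sum.distrib Int_def)
qed

lemma dinv_as_sum: "int (dinv N path P) = (\<Sum>(r,x)\<in>cells. \<Sum>j\<in>{r<..m}. dinv_cnt r x j)"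
proof -
  have "int (dinv N path P) = (\<Sum>i\<in>{1..N}. \<Sum>i'\<in>{1..N}. of_bool ((i,i') \<in> dinv_pairs))"
    unfolding dinv_def dinv_pairs_def[symmetric] by (rule card_subset_times) (auto simp: dinv_pairs_def)
  also have "\<dots> = (\<Sum>i'\<in>{1..N}. \<Sum>i\<in>{1..N}. of_bool ((i,i') \<in> dinv_pairs))"
    by (rule sum.swap)
  also have "\<dots> = (\<Sum>c'\<in>cells. \<Sum>i\<in>{1..N}. of_bool ((i, row_of c') \<in> dinv_pairs))"
    by (rule sum.reindex_bij_betw[OF bij_row_of, symmetric])
  also have "\<dots> = (\<Sum>c'\<in>cells. \<Sum>c\<in>cells. of_bool ((row_of c, row_of c') \<in> dinv_pairs))"
    by (intro sum.cong refl sum.reindex_bij_betw[OF bij_row_of, symmetric])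
  also have "\<dots> = (\<Sum>c'\<in>cells. int (card {c\<in>cells. (row_of c, row_of c') \<in> dinv_pairs}))"
    using finite_cells by (simp add: Int_def)
  also have "\<dots> = (\<Sum>(r,x)\<in>cells. \<Sum>j\<in>{r<..m}. dinv_cnt r x j)"
    using card_dinv_pairs_with by (intro sum.cong refl) auto
  finally show ?thesis .
qed

definition triple_cnt :: "nat \<Rightarrow> int \<Rightarrow> nat \<Rightarrow> int" where
  "triple_cnt r x j = of_bool (lab (r,x) \<noteq> 0 \<and> int (a j) + of_bool (j \<in> zero_rows P) \<le> x \<and> x \<le> int (b j) \<and>
      (x = int (a j) + of_bool (j \<in> zero_rows P) \<or> filling P (j,x) < lab (r,x)) \<and>
      (x = int (b j) \<or> lab (r,x) < filling P (j,x+1)))"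

lemma hw0_as_sum:
  "int (hw0 m (alphaJ (zero_rows P) a) (betaT a \<tau>) (filling P)) =
     (\<Sum>(r,x)\<in>cells. \<Sum>j\<in>{r<..m}. triple_cnt r x j)"
proof -
  define T where "T = {(r,j,i). (r,i) \<in> rs_boxes m (alphaJ (zero_rows P) a) (betaT a \<tau>) \<and> r < j \<and> j \<le> m \<and>
       alphaJ (zero_rows P) a j \<le> i \<and> i \<le> betaT a \<tau> j \<and>
       (i = alphaJ (zero_rows P) a j \<or> filling P (j,i) < filling P (r,i)) \<and>
       (i = betaT a \<tau> j \<or> filling P (r,i) < filling P (j,i+1))}"
  have "triple_cnt r x j = of_bool ((r,j,x) \<in> T)" if "(r,x) \<in> cells" "j \<in> {r<..m}" for r j x
    using that unfolding T_def boxes_eq triple_cnt_def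
    by (auto simp: filling_def lab_def alphaJ_def betaT_def b_def)
  then have "int (card {j\<in>{r<..m}. (r,j,x) \<in> T}) = (\<Sum>j\<in>{r<..m}. triple_cnt r x j)"
    if "(r,x) \<in> cells" for r x
    using that by (simp add: Int_def)
  moreover have "card T = (\<Sum>(r,x)\<in>cells. card {j\<in>{r<..m}. (r,j,x) \<in> T})"
    by (rule card_triples_by_fibres[of cells "\<lambda>r. {r<..m}"]) (use finite_cells boxes_eq in \<open>auto simp: T_def\<close>)
  ultimately show ?thesis
    unfolding hw0_def T_def[symmetric] by (auto intro!: sum.cong)
qed

definition zero_cnt :: "nat \<Rightarrow> int \<Rightarrow> nat \<Rightarrow> int" where
  "zero_cnt r x j = of_bool (lab (r,x) = 0 \<and> j \<notin> zero_rows P \<and> int (a j) = x)"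

lemma dinv_cnt_split:
  assumes r: "(r,x) \<in> cells" and j: "j \<in> {1..m}"
  shows "dinv_cnt r x j = triple_cnt r x j + gap x j + zero_cnt r x j"
proof -
  have in_row: "(j,y) \<in> cells \<longleftrightarrow> int (a j) < y \<and> y \<le> int (b j)" for y
    using j unfolding cells_def by simp
  have filling_j: "filling P (j,y) = (if int (a j) < y \<and> y \<le> int (b j) then lab (j,y) else 0)" for y
    unfolding filling_def lab_def using in_row by simp
  have "int (a j) \<le> int (b j)" "j \<in> zero_rows P \<Longrightarrow> int (a j) < int (b j)"
    using a_le_b[OF j] zero_rows_less by auto
  moreover have "int (a j) < y \<Longrightarrow> y \<le> int (b j) \<Longrightarrow> (lab (j,y) = 0 \<longleftrightarrow> j \<in> zero_rows P \<and> y = int (a j) + 1)"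
    for y using lab_zero_iff in_row by simp
  moreover have "int (a j) < x \<Longrightarrow> x + 1 \<le> int (b j) \<Longrightarrow> lab (j,x) < lab (j,x+1)"
    using lab_strict in_row by simp
  ultimately have "(of_bool (int (a j) < x \<and> x \<le> int (b j) \<and> lab (j,x) < lab (r,x))
      + of_bool (int (a j) < x + 1 \<and> x + 1 \<le> int (b j) \<and> lab (r,x) < lab (j,x+1)) :: int)
    = triple_cnt r x j + gap x j + zero_cnt r x j"
    unfolding triple_cnt_def gap_def zero_cnt_def filling_j
    by (subst triple_count_identity) auto
  then show ?thesis by (simp add: dinv_cnt_def in_row conj_assoc)
qed

lemma sum_zero_cnt_eq_hstat:
  "(\<Sum>(r,x)\<in>cells. \<Sum>j\<in>{r<..m}. zero_cnt r x j) = int (hstat (m-1) (zero_rows P) a)"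
proof -
  let ?J = "zero_rows P"
  have zero: "(r, int (a r) + 1) \<in> {c\<in>cells. lab c = 0}" if "r \<in> ?J" for r
    unfolding zero_cells using that by blast
  have "(\<Sum>(r,x)\<in>cells. \<Sum>j\<in>{r<..m}. zero_cnt r x j) =
      (\<Sum>(r,x)\<in>(\<lambda>r. (r, int (a r) + 1)) ` ?J. \<Sum>j\<in>{r<..m}. zero_cnt r x j)"
  proof (intro sum.mono_neutral_right finite_cells ballI)
    show "(\<lambda>r. (r, int (a r) + 1)) ` ?J \<subseteq> cells" using zero by blast
    fix c assume "c \<in> cells - (\<lambda>r. (r, int (a r) + 1)) ` ?J"
    then have "lab c \<noteq> 0" unfolding zero_cells[symmetric] by auto
    then show "(case c of (r,x) \<Rightarrow> \<Sum>j\<in>{r<..m}. zero_cnt r x j) = 0"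
      by (cases c) (simp add: zero_cnt_def)
  qed
  also have "\<dots> = (\<Sum>r\<in>?J. \<Sum>j\<in>{r<..m}. of_bool (j \<notin> ?J \<and> int (a j) = int (a r) + 1))"
    using zero by (subst sum.reindex) (auto simp: inj_on_def zero_cnt_def intro!: sum.cong)
  also have "\<dots> = int (hstat (m-1) ?J a)"
    unfolding hstat_as_sum[OF zero_rows_sub] by (simp add: Int_def int_eq_iff_Suc)
  finally show ?thesis .
qed

theorem dinv_decomposition:
  "dinv N path P = dstat m (\<lambda>j. a (j - 1)) \<tau> + hstat (m-1) (zero_rows P) a
     + hw0 m (alphaJ (zero_rows P) a) (betaT a \<tau>) (filling P)"
proof -
  have "int (dinv N path P) = (\<Sum>(r,x)\<in>cells. \<Sum>j\<in>{r<..m}. triple_cnt r x j + gap x j + zero_cnt r x j)"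
    unfolding dinv_as_sum using dinv_cnt_split by (intro sum.cong refl) (auto simp: cells_def)
  also have "\<dots> = int (hw0 m (alphaJ (zero_rows P) a) (betaT a \<tau>) (filling P))
      + int (dstat m (\<lambda>j. a (j - 1)) \<tau>) + int (hstat (m-1) (zero_rows P) a)"
    unfolding hw0_as_sum sum_gap_eq_dstat[symmetric] sum_zero_cnt_eq_hstat[symmetric]
    by (simp add: sum.distrib case_prod_beta)
  finally show ?thesis by simp
qed

lemma card_zero_rows: "card (zero_rows P) = card {i\<in>{1..N}. P i = 0}"
proof -
  have "card (zero_rows P) = card {c\<in>cells. lab c = 0}"
    unfolding zero_cells by (rule card_image[symmetric]) (auto simp: inj_on_def)
  then show ?thesis using card_rows[of "\<lambda>i. P i = 0"] by (simp add: lab_def)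
qed

lemma zero_rows_alpha_le: "j \<in> {1..m} \<Longrightarrow> alphaJ (zero_rows P) a j \<le> betaT a \<tau> j"
  using a_le_b zero_rows_less unfolding alphaJ_def betaT_def b_def by fastforce

lemma filling_row_strict: "row_strict m (alphaJ (zero_rows P) a) (betaT a \<tau>) (filling P)"
  unfolding row_strict_def boxes_eq
  using lab_strict by (auto simp: filling_def lab_def)

lemma card_filling_eq:
  "k \<ge> 1 \<Longrightarrow> card {c\<in>rs_boxes m (alphaJ (zero_rows P) a) (betaT a \<tau>). filling P c = k}
     = card {i\<in>{1..N}. P i = k}"
proof -
  assume k: "k \<ge> 1"
  have "{c\<in>{c\<in>cells. lab c \<noteq> 0}. filling P c = k} = {c\<in>cells. P (row_of c) = k}"
    using k by (auto simp: filling_def lab_def)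
  then show ?thesis unfolding boxes_eq using card_rows[of "\<lambda>i. P i = k"] by simp
qed

end


section \<open>Labellings as fillings of the row shape\<close>

context row_shape
begin

definition weighted_labellings :: "nat \<Rightarrow> (nat \<Rightarrow> nat) \<Rightarrow> (nat \<Rightarrow> nat) set" where
  "weighted_labellings l \<mu> = {P \<in> labellings N l path. has_wt N P \<mu>}"

definition admissible_sets :: "nat \<Rightarrow> nat set set" where
  "admissible_sets l = {J. J \<subseteq> {1..m-1} \<and> card J = l \<and> (\<forall>j\<in>{1..m}. alphaJ J a j \<le> betaT a \<tau> j)}"

definition fillings :: "nat set \<Rightarrow> (nat \<Rightarrow> nat) \<Rightarrow> (nat \<times> int \<Rightarrow> nat) set" where
  "fillings J \<mu> = {S. row_strict m (alphaJ J a) (betaT a \<tau>) S \<and>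
      (\<forall>k\<ge>1. card {c\<in>rs_boxes m (alphaJ J a) (betaT a \<tau>). S c = k} = \<mu> k)}"

lemma weighted_labelling_shape: "P \<in> weighted_labellings l \<mu> \<Longrightarrow> labelled_shape N m a \<tau> P"
  unfolding weighted_labellings_def labellings_def by unfold_locales auto

lemma zero_rows_admissible: "P \<in> weighted_labellings l \<mu> \<Longrightarrow> zero_rows P \<in> admissible_sets l"
proof -
  assume P: "P \<in> weighted_labellings l \<mu>"
  interpret labelled_shape N m a \<tau> P by (rule weighted_labelling_shape[OF P])
  show ?thesis
    using P card_zero_rows zero_rows_sub zero_rows_alpha_le
    unfolding admissible_sets_def weighted_labellings_def labellings_def by auto
qed

lemma filling_in_fillings: "P \<in> weighted_labellings l \<mu> \<Longrightarrow> filling P \<in> fillings (zero_rows P) \<mu>"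
proof -
  assume P: "P \<in> weighted_labellings l \<mu>"
  interpret labelled_shape N m a \<tau> P by (rule weighted_labelling_shape[OF P])
  show ?thesis
    using P filling_row_strict card_filling_eq
    unfolding fillings_def weighted_labellings_def has_wt_def by auto
qed

context
  fixes J S l \<mu>
  assumes J: "J \<in> admissible_sets l" and S: "S \<in> fillings J \<mu>"
begin

lemma fillings_row_strict: "row_strict m (alphaJ J a) (betaT a \<tau>) S"
  using S unfolding fillings_def by simp

lemma filling_outside: "c \<notin> cells \<Longrightarrow> S c = 0"
  using fillings_row_strict unfolding row_strict_def shape_boxes by (cases c) auto

lemma filling_zero_iff:
  assumes c: "c \<in> cells"
  shows "S c = 0 \<longleftrightarrow> fst c \<in> J \<and> snd c = int (a (fst c)) + 1"
proof
  assume "S c = 0"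
  moreover have "c \<in> rs_boxes m (alphaJ J a) (betaT a \<tau>) \<Longrightarrow> 1 \<le> S c"
    using fillings_row_strict unfolding row_strict_def by blast
  ultimately show "fst c \<in> J \<and> snd c = int (a (fst c)) + 1" using c unfolding shape_boxes by auto
next
  assume "fst c \<in> J \<and> snd c = int (a (fst c)) + 1"
  then have "c \<notin> rs_boxes m (alphaJ J a) (betaT a \<tau>)" unfolding shape_boxes by auto
  then show "S c = 0" using fillings_row_strict unfolding row_strict_def by blast
qed

lemma admissible_cell: "s \<in> J \<Longrightarrow> (s, int (a s) + 1) \<in> cells"
proof -
  assume s: "s \<in> J"
  then have "s \<in> {1..m-1}" using J unfolding admissible_sets_def by blast
  then have "s \<in> {1..m}" by auto
  then have "alphaJ J a s \<le> betaT a \<tau> s" using J unfolding admissible_sets_def by auto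
  then show ?thesis using s \<open>s \<in> {1..m}\<close> unfolding alphaJ_def betaT_def cells_def b_def by auto
qed

lemma filling_strict:
  assumes "(s,x) \<in> cells" "(s,x+1) \<in> cells"
  shows "S (s,x) < S (s,x+1)"
proof -
  have "S (s,x+1) \<noteq> 0" using filling_zero_iff[OF assms(2)] assms(1) unfolding cells_def by auto
  show ?thesis
  proof (cases "S (s,x) = 0")
    case False
    then have "(s,x) \<in> rs_boxes m (alphaJ J a) (betaT a \<tau>)" "(s,x+1) \<in> rs_boxes m (alphaJ J a) (betaT a \<tau>)"
      using filling_zero_iff assms \<open>S (s,x+1) \<noteq> 0\<close> unfolding shape_boxes by auto
    then show ?thesis using fillings_row_strict unfolding row_strict_def by blast
  qed (use \<open>S (s,x+1) \<noteq> 0\<close> in simp)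
qed

lemma labelling_row_of: "c \<in> cells \<Longrightarrow> labelling S (row_of c) = S c"
  unfolding labelling_def using row_of_range cell_of_row_of by simp

lemma labelling_strict:
  assumes i: "i \<in> {1..<N}" and same: "path i = path (Suc i)"
  shows "labelling S i < labelling S (Suc i)"
proof -
  have i1: "i \<in> {1..N}" "Suc i \<in> {1..N}" using i by auto
  then have "band (Suc i) = band i"
    using same line_inj band_spec[OF i1(1)] band_spec[OF i1(2)] unfolding path_def by auto
  then obtain s x where x: "cell_of i = (s, x)" "cell_of (Suc i) = (s, x + 1)"
    unfolding cell_of_def by simp
  moreover have "cell_of i \<in> cells" "cell_of (Suc i) \<in> cells" using cell_of_range i1 by auto
  ultimately have "S (cell_of i) < S (cell_of (Suc i))" using filling_strict[of s x] by simp
  then show ?thesis using i1 unfolding labelling_def by simp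
qed

lemma card_labelling: "card {i\<in>{1..N}. labelling S i = k} = card {c\<in>cells. S c = k}"
proof -
  have "{c\<in>cells. labelling S (row_of c) = k} = {c\<in>cells. S c = k}"
    using labelling_row_of by auto
  then show ?thesis using card_rows[of "\<lambda>i. labelling S i = k"] by simp
qed

lemma card_labelling_zeros: "card {i\<in>{1..N}. labelling S i = 0} = l"
proof -
  have "{c\<in>cells. S c = 0} = (\<lambda>s. (s, int (a s) + 1)) ` J"
  proof (intro equalityI subsetI)
    fix c assume "c \<in> {c\<in>cells. S c = 0}"
    then have "fst c \<in> J" "c = (fst c, int (a (fst c)) + 1)"
      using filling_zero_iff[of c] by (auto simp: prod_eq_iff)
    then show "c \<in> (\<lambda>s. (s, int (a s) + 1)) ` J"
      using image_eqI[of c "\<lambda>s. (s, int (a s) + 1)" "fst c"] by simp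
  next
    fix c assume "c \<in> (\<lambda>s. (s, int (a s) + 1)) ` J"
    then show "c \<in> {c\<in>cells. S c = 0}" using filling_zero_iff admissible_cell by auto
  qed
  then have "card {c\<in>cells. S c = 0} = card J" by (simp add: card_image inj_on_def)
  moreover have "card {i\<in>{1..N}. labelling S i = 0} = card {c\<in>cells. S c = 0}"
    by (rule card_labelling)
  ultimately show ?thesis using J unfolding admissible_sets_def by simp
qed

lemma card_labelling_eq: "k \<ge> 1 \<Longrightarrow> card {i\<in>{1..N}. labelling S i = k} = \<mu> k"
proof -
  assume k: "k \<ge> 1"
  have "{c\<in>cells. S c = k} = {c\<in>rs_boxes m (alphaJ J a) (betaT a \<tau>). S c = k}"
  proof (rule set_eqI)
    fix c show "c \<in> {c\<in>cells. S c = k} \<longleftrightarrow> c \<in> {c\<in>rs_boxes m (alphaJ J a) (betaT a \<tau>). S c = k}"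
      using filling_zero_iff[of c] k unfolding shape_boxes by auto
  qed
  moreover have "card {i\<in>{1..N}. labelling S i = k} = card {c\<in>cells. S c = k}"
    by (rule card_labelling)
  ultimately show ?thesis using S k unfolding fillings_def by auto
qed

lemma labelling_in: "labelling S \<in> weighted_labellings l \<mu>"
  unfolding weighted_labellings_def labellings_def has_wt_def mem_Collect_eq
proof (intro conjI allI impI ballI)
  fix i assume "i \<notin> {1..N}"
  then show "labelling S i = 0" unfolding labelling_def by auto
next
  fix i assume "i \<in> {1..<N}" "path i = path (Suc i)"
  then show "labelling S i < labelling S (Suc i)" by (rule labelling_strict)
next
  show "card {i\<in>{1..N}. labelling S i = 0} = l" by (rule card_labelling_zeros)
next
  fix i assume i: "i \<in> {1..N}" "path i = 0"
  then have "band i = m" using path_zero_iff by simp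
  then have "fst (cell_of i) \<notin> J" using J m_pos unfolding cell_of_def admissible_sets_def by auto
  then show "labelling S i \<noteq> 0" using filling_zero_iff[OF cell_of_range[OF i(1)]] i unfolding labelling_def by simp
next
  fix k :: nat assume "k \<ge> 1"
  then show "card {i\<in>{1..N}. labelling S i = k} = \<mu> k" by (rule card_labelling_eq)
qed

lemma filling_labelling: "filling (labelling S) = S"
  using labelling_row_of filling_outside unfolding filling_def by auto

lemma zero_rows_labelling: "zero_rows (labelling S) = J"
proof (intro equalityI subsetI)
  fix s assume s: "s \<in> zero_rows (labelling S)"
  then have c: "(s, int (a s) + 1) \<in> cells" unfolding zero_rows_def cells_def by auto
  have "labelling S (row_of (s, int (a s) + 1)) = 0" using s unfolding zero_rows_def by simp
  then have "S (s, int (a s) + 1) = 0" using labelling_row_of[OF c] by simp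
  then show "s \<in> J" using filling_zero_iff[OF c] by simp
next
  fix s assume s: "s \<in> J"
  note c = admissible_cell[OF s]
  have "S (s, int (a s) + 1) = 0" using filling_zero_iff[OF c] s by simp
  moreover have "s \<in> {1..m-1}" using s J unfolding admissible_sets_def by blast
  moreover have "a s < b s" using c unfolding cells_def by auto
  ultimately show "s \<in> zero_rows (labelling S)"
    using labelling_row_of[OF c] unfolding zero_rows_def by simp
qed

end

lemma labelling_filling: "P \<in> weighted_labellings l \<mu> \<Longrightarrow> labelling (filling P) = P"
  unfolding labelling_def filling_def weighted_labellings_def labellings_def
  using cell_of_range row_of_cell_of by auto

lemma finite_admissible_sets: "finite (admissible_sets l)"
  by (rule finite_subset[of _ "Pow {1..m-1}"]) (auto simp: admissible_sets_def)

lemma finite_fillings: "finite (fillings J \<mu>)"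
proof -
  have "finite (rs_boxes m (alphaJ J a) (betaT a \<tau>))"
    unfolding shape_boxes using finite_cells by simp
  then have "finite {S. (\<forall>c. c \<notin> rs_boxes m (alphaJ J a) (betaT a \<tau>) \<longrightarrow> S c = 0) \<and>
      (\<forall>k\<ge>1. card {c\<in>rs_boxes m (alphaJ J a) (betaT a \<tau>). S c = k} = \<mu> k)}"
    by (rule finite_weighted_funs)
  then show ?thesis
    by (rule finite_subset[rotated]) (auto simp: fillings_def row_strict_def)
qed

theorem sum_weighted_labellings:
  fixes q :: "'f::field"
  shows "(\<Sum>P\<in>weighted_labellings l \<mu>. q ^ dinv N path P) =
    (\<Sum>J\<in>admissible_sets l. q ^ (dstat m (\<lambda>j. a (j - 1)) \<tau> + hstat (m-1) J a) *
        (\<Sum>S\<in>fillings J \<mu>. q ^ hw0 m (alphaJ J a) (betaT a \<tau>) S))"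
proof -
  have "(\<Sum>P\<in>weighted_labellings l \<mu>. q ^ dinv N path P) =
     (\<Sum>(J,S)\<in>(SIGMA J:admissible_sets l. fillings J \<mu>).
        q ^ (dstat m (\<lambda>j. a (j - 1)) \<tau> + hstat (m-1) J a + hw0 m (alphaJ J a) (betaT a \<tau>) S))"
  proof (rule sum.reindex_bij_witness[where i = "\<lambda>(J,S). labelling S" and j = "\<lambda>P. (zero_rows P, filling P)"])
    fix P assume P: "P \<in> weighted_labellings l \<mu>"
    interpret labelled_shape N m a \<tau> P by (rule weighted_labelling_shape[OF P])
    show "(case (zero_rows P, filling P) of (J, S) \<Rightarrow> labelling S) = P"
      using labelling_filling[OF P] by simp
    show "(zero_rows P, filling P) \<in> (SIGMA J:admissible_sets l. fillings J \<mu>)"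
      using zero_rows_admissible[OF P] filling_in_fillings[OF P] by simp
    show "(case (zero_rows P, filling P) of (J, S) \<Rightarrow>
        q ^ (dstat m (\<lambda>j. a (j - 1)) \<tau> + hstat (m-1) J a + hw0 m (alphaJ J a) (betaT a \<tau>) S))
        = q ^ dinv N path P"
      using dinv_decomposition by simp
  next
    fix p assume "p \<in> (SIGMA J:admissible_sets l. fillings J \<mu>)"
    then obtain J S where p: "p = (J,S)" and J: "J \<in> admissible_sets l" and S: "S \<in> fillings J \<mu>"
      by auto
    show "(zero_rows (case p of (J, S) \<Rightarrow> labelling S), filling (case p of (J, S) \<Rightarrow> labelling S)) = p"
      using zero_rows_labelling[OF J S] filling_labelling[OF J S] p by simp
    show "(case p of (J, S) \<Rightarrow> labelling S) \<in> weighted_labellings l \<mu>"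
      using labelling_in[OF J S] p by simp
  qed
  also have "\<dots> = (\<Sum>J\<in>admissible_sets l. \<Sum>S\<in>fillings J \<mu>.
      q ^ (dstat m (\<lambda>j. a (j - 1)) \<tau> + hstat (m-1) J a + hw0 m (alphaJ J a) (betaT a \<tau>) S))"
    by (rule sum.Sigma[symmetric]) (use finite_admissible_sets finite_fillings in auto)
  finally show ?thesis
    by (simp add: power_add sum_distrib_left)
qed

end

section \<open>Recovering the row shape from a path and a choice of rises\<close>

text \<open>The lines of a pair (e, K) are 0 together with the x in {1..N-1} for which column
  N + 1 - x is not chosen in K; by rise_cols_iff every south step of e lies on one of them.\<close>

definition lines :: "nat \<Rightarrow> nat set \<Rightarrow> nat set" where
  "lines N K = {x\<in>{0..N-1}. x = 0 \<or> N + 1 - x \<notin> K}"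

definition line_of :: "nat \<Rightarrow> nat \<Rightarrow> nat set \<Rightarrow> nat \<Rightarrow> nat" where
  "line_of N m K s = (if s = 0 then N else sorted_list_of_set (lines N K) ! (m - s))"

definition tau_of :: "nat \<Rightarrow> nat \<Rightarrow> nat set \<Rightarrow> nat \<Rightarrow> nat" where
  "tau_of N m K s = (if s \<in> {1..m} then line_of N m K (s-1) - line_of N m K s - 1 else 0)"

definition a_of :: "nat \<Rightarrow> nat \<Rightarrow> (nat \<Rightarrow> nat) \<Rightarrow> nat set \<Rightarrow> nat \<Rightarrow> nat" where
  "a_of N m e K s = (if s \<in> {1..m-1} then rows_upto N e (line_of N m K s - 1) - line_of N m K s else 0)"

locale rise_choice =
  fixes N m :: nat and e :: "nat \<Rightarrow> nat" and K :: "nat set"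
  assumes m_pos: "1 \<le> m" and m_le: "m \<le> N" and e_dyck: "e \<in> dyck N"
    and K_rise: "K \<subseteq> rise_cols N e" and card_K: "card K = N - m"
begin

abbreviation "ks \<equiv> sorted_list_of_set (lines N K)"

lemma K_sub: "K \<subseteq> {2..N}"
  using K_rise unfolding rise_cols_def by auto

lemma finite_lines: "finite (lines N K)"
  unfolding lines_def by simp

lemma lines_eq: "lines N K = insert 0 ({1..N-1} - (\<lambda>i. N + 1 - i) ` K)"
proof -
  have "x \<in> (\<lambda>i. N + 1 - i) ` K \<longleftrightarrow> N + 1 - x \<in> K" if "x \<in> {1..N-1}" for x
  proof
    assume "x \<in> (\<lambda>i. N + 1 - i) ` K"
    then obtain i where "i \<in> K" "x = N + 1 - i" by auto
    moreover then have "i \<in> {2..N}" using K_sub by auto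
    ultimately show "N + 1 - x \<in> K" by (simp add: Suc_diff_le)
  next
    assume "N + 1 - x \<in> K"
    then show "x \<in> (\<lambda>i. N + 1 - i) ` K" using that by (auto intro: image_eqI[of _ _ "N + 1 - x"])
  qed
  then show ?thesis unfolding lines_def using m_pos m_le by auto
qed

lemma card_lines: "card (lines N K) = m"
proof -
  have "inj_on (\<lambda>i. N + 1 - i) K"
  proof (rule inj_onI)
    fix x y assume "x \<in> K" "y \<in> K" "N + 1 - x = N + 1 - y"
    moreover then have "x \<le> N" "y \<le> N" using K_sub by auto
    ultimately show "x = y" by simp
  qed
  then have "card ((\<lambda>i. N + 1 - i) ` K) = N - m" using card_K by (simp add: card_image)
  moreover have "(\<lambda>i. N + 1 - i) ` K \<subseteq> {1..N-1}" using K_sub by (fastforce simp: subset_iff)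
  moreover have "finite K" using K_sub finite_subset by blast
  ultimately have "card ({1..N-1} - (\<lambda>i. N + 1 - i) ` K) = (N - 1) - (N - m)"
    by (simp add: card_Diff_subset)
  then show ?thesis unfolding lines_eq using m_pos m_le by simp
qed

lemma length_ks: "length ks = m"
  using card_lines finite_lines by simp

lemma ks_less: "i < j \<Longrightarrow> j < m \<Longrightarrow> ks ! i < ks ! j"
  using sorted_wrt_nth_less[of "(<)" ks] length_ks by simp

lemma ks_in_lines: "i < m \<Longrightarrow> ks ! i \<in> lines N K"
  using finite_lines length_ks nth_mem by (metis set_sorted_list_of_set)

lemma line_of_in_lines: "s \<in> {1..m} \<Longrightarrow> line_of N m K s \<in> lines N K"
  unfolding line_of_def using ks_in_lines by auto

lemma line_of_less: "s \<in> {1..m} \<Longrightarrow> line_of N m K s < N"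
  using line_of_in_lines m_le unfolding lines_def by fastforce

lemma line_of_0: "line_of N m K 0 = N"
  unfolding line_of_def by simp

lemma line_of_strict: "s < s' \<Longrightarrow> s' \<le> m \<Longrightarrow> line_of N m K s' < line_of N m K s"
  using line_of_less[of s'] line_of_0 ks_less[of "m - s'" "m - s"] by (cases "s = 0") (auto simp: line_of_def)

lemma line_of_m: "line_of N m K m = 0"
proof -
  obtain p where p: "p < m" "ks ! p = 0"
    using lines_eq length_ks finite_lines by (metis in_set_conv_nth insertI1 set_sorted_list_of_set)
  then have "ks ! 0 \<le> 0" using ks_less[of 0 p] by (cases "p = 0") auto
  then show ?thesis unfolding line_of_def using m_pos by simp
qed

lemma line_of_pos: "s < m \<Longrightarrow> 1 \<le> line_of N m K s"
  using line_of_strict[of s m] line_of_m by simp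

lemma in_lines_ex_line_of: "x \<in> lines N K \<Longrightarrow> \<exists>s\<in>{1..m}. line_of N m K s = x"
proof -
  assume "x \<in> lines N K"
  then obtain p where "p < m" "ks ! p = x"
    using length_ks finite_lines by (metis in_set_conv_nth set_sorted_list_of_set)
  then show ?thesis unfolding line_of_def by (intro bexI[of _ "m - p"]) auto
qed

lemma not_in_lines_between:
  assumes s: "s \<in> {1..m}" and x: "line_of N m K s < x" "x < line_of N m K (s-1)"
  shows "x \<notin> lines N K"
proof
  assume "x \<in> lines N K"
  then obtain s' where s': "s' \<in> {1..m}" "line_of N m K s' = x" using in_lines_ex_line_of by blast
  have "s' < s"
  proof (rule ccontr)
    assume "\<not> s' < s"
    then have "line_of N m K s' \<le> line_of N m K s" using line_of_strict[of s s'] s' by (cases "s = s'") auto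
    then show False using s' x by simp
  qed
  moreover have "s - 1 < s'"
  proof (rule ccontr)
    assume "\<not> s - 1 < s'"
    then have "s' \<le> s - 1" "s - 1 \<le> m" using s by auto
    then have "line_of N m K (s-1) \<le> line_of N m K s'" using line_of_strict[of s' "s-1"] by (cases "s' = s - 1") auto
    then show False using s' x by simp
  qed
  ultimately show False by simp
qed

lemma rows_upto_const_between:
  assumes s: "s \<in> {1..m}"
  shows "rows_upto N e (line_of N m K (s-1) - 1) = rows_upto N e (line_of N m K s)"
proof -
  have step: "rows_upto N e (x - 1) = rows_upto N e x"
    if x: "line_of N m K s < x" "x < line_of N m K (s-1)" for x
  proof -
    have "line_of N m K (s-1) \<le> N"
    proof (cases "s = 1")
      case False
      then have "s - 1 \<in> {1..m}" using s by auto
      then show ?thesis using line_of_less[of "s-1"] by simp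
    qed (simp add: line_of_0)
    then have xr: "x \<in> {1..N-1}" using x by auto
    then have "N + 1 - x \<in> K" using not_in_lines_between[OF s x] unfolding lines_def by auto
    moreover have "N + 1 - x \<in> {2..N}" "N - (N + 1 - x) = x - 1" using xr by auto
    ultimately show ?thesis
      using rise_cols_iff[OF e_dyck, of "N + 1 - x"] K_rise xr by (auto simp: Suc_diff_le)
  qed
  have "rows_upto N e (line_of N m K s + d) = rows_upto N e (line_of N m K s)"
    if "line_of N m K s + d < line_of N m K (s-1)" for d
    using that
  proof (induction d)
    case (Suc d)
    then show ?case using step[of "line_of N m K s + Suc d"] by simp
  qed simp
  from this[of "line_of N m K (s-1) - 1 - line_of N m K s"] show ?thesis
    using line_of_strict[of "s-1" s] s by simp
qed

lemma tau_of_partial: "n \<le> m \<Longrightarrow> (\<Sum>s=1..n. tau_of N m K s) + n + line_of N m K n = N"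
proof (induction n)
  case (Suc n)
  have "line_of N m K (Suc n) < line_of N m K n" using line_of_strict[of n "Suc n"] Suc by simp
  then show ?case using Suc by (simp add: tau_of_def)
qed (simp add: line_of_0)

lemma line_of_le_rows_upto: "s < m \<Longrightarrow> line_of N m K s \<le> rows_upto N e (line_of N m K s - 1)"
proof -
  assume s: "s < m"
  have "line_of N m K s \<le> N" using line_of_0 line_of_less[of s] s by (cases "s = 0") auto
  then show ?thesis using line_of_pos[OF s] rows_upto_ge[OF e_dyck, of "line_of N m K s - 1"] by simp
qed

lemma a_of_eq: "s \<le> m - 1 \<Longrightarrow> a_of N m e K s = rows_upto N e (line_of N m K s - 1) - line_of N m K s"
  using rows_upto_top[OF e_dyck, of "N - 1"] by (cases "s = 0") (auto simp: a_of_def line_of_0)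

lemma a_of_le:
  assumes j: "j \<in> {1..m}"
  shows "a_of N m e K j \<le> a_of N m e K (j-1) + 1 + tau_of N m K j"
proof (cases "j = m")
  case True
  then show ?thesis using m_pos by (simp add: a_of_def)
next
  case False
  then have j1: "j \<le> m - 1" "j - 1 \<le> m - 1" "j - 1 < m" using j by auto
  define L L' where "L = line_of N m K j" and "L' = line_of N m K (j-1)"
  have lt: "L < L'" using line_of_strict[of "j-1" j] j unfolding L_def L'_def by auto
  have "rows_upto N e (L - 1) \<le> rows_upto N e (L' - 1)"
    using lt by (intro rows_upto_mono) simp
  moreover have "L' \<le> rows_upto N e (L' - 1)"
    using line_of_le_rows_upto[OF j1(3)] unfolding L'_def .
  moreover have "a_of N m e K j = rows_upto N e (L - 1) - L"
    and "a_of N m e K (j-1) = rows_upto N e (L' - 1) - L'"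
    using a_of_eq[OF j1(1)] a_of_eq[OF j1(2)] unfolding L_def L'_def by auto
  moreover have "tau_of N m K j = L' - L - 1"
    using j unfolding tau_of_def L_def L'_def by simp
  ultimately show ?thesis using lt by linarith
qed

lemma row_shape_of: "row_shape N m (a_of N m e K) (tau_of N m K)"
proof unfold_locales
  show "1 \<le> m" "m \<le> N" using m_pos m_le .
  show "a_of N m e K i = 0" if "i \<notin> {1..m - 1}" for i
    unfolding a_of_def if_not_P[OF that] ..
  show "tau_of N m K i = 0" if "i \<notin> {1..m}" for i
    unfolding tau_of_def if_not_P[OF that] ..
  show "(\<Sum>j=1..m. tau_of N m K j) = N - m"
    using tau_of_partial[of m] line_of_m by simp
  show "a_of N m e K j \<le> a_of N m e K (j - 1) + 1 + tau_of N m K j" if "j \<in> {1..m}" for j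
    using that by (rule a_of_le)
qed

end

sublocale rise_choice \<subseteq> shape: row_shape N m "a_of N m e K" "tau_of N m K"
  by (rule row_shape_of)

context rise_choice
begin

lemma shape_line: "s \<le> m \<Longrightarrow> shape.line s = line_of N m K s"
proof (induction s)
  case (Suc s)
  have "shape.line s = shape.line (Suc s) + 1 + tau_of N m K (Suc s)"
    using shape.line_step[of "Suc s"] Suc by simp
  moreover have "tau_of N m K (Suc s) = line_of N m K s - line_of N m K (Suc s) - 1"
    unfolding tau_of_def using Suc by simp
  moreover have "line_of N m K (Suc s) < line_of N m K s" using line_of_strict[of s "Suc s"] Suc by simp
  ultimately show ?case using Suc by simp
qed (simp add: shape.line_0 line_of_0)

lemma shape_north_rows: "s \<le> m - 1 \<Longrightarrow> shape.north_rows s = rows_upto N e (line_of N m K s - 1)"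
  using a_of_eq[of s] shape_line[of s] line_of_le_rows_upto[of s] m_pos
  unfolding shape.north_rows_def by simp

lemma shape_north_rows_prev:
  assumes "s \<in> {1..m}"
  shows "shape.north_rows (s-1) = rows_upto N e (line_of N m K s)"
proof -
  have "s - 1 \<le> m - 1" using assms by auto
  then show ?thesis using shape_north_rows[of "s-1"] rows_upto_const_between[OF assms] by simp
qed

lemma shape_path: "shape.path = e"
proof
  fix i
  show "shape.path i = e i"
  proof (cases "i \<in> {1..N}")
    case False
    then show ?thesis unfolding shape.path_def using dyck_outside[OF e_dyck False] by auto
  next
    case True
    define s where "s = shape.band i"
    have s: "s \<in> {1..m}" "shape.north_rows s < i" "i \<le> shape.north_rows (s-1)"
      using shape.band_spec[OF True] unfolding s_def by auto
    have path: "shape.path i = line_of N m K s"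
      unfolding shape.path_def s_def[symmetric] using True shape_line s by simp
    have le: "e i \<le> line_of N m K s"
      using le_rows_upto_iff[OF e_dyck True] s(3) shape_north_rows_prev[OF s(1)] by simp
    show ?thesis
    proof (cases "s = m")
      case True
      then show ?thesis using path le line_of_m by simp
    next
      case False
      then have "s \<le> m - 1" using s(1) by auto
      then have "\<not> e i \<le> line_of N m K s - 1"
        using le_rows_upto_iff[OF e_dyck \<open>i \<in> {1..N}\<close>] s(2) shape_north_rows[of s] by simp
      then show ?thesis using path le by simp
    qed
  qed
qed

lemma shape_free_cols: "shape.free_cols = K"
proof -
  have key: "N + 1 - i \<in> line_of N m K ` {1..m-1} \<longleftrightarrow> i \<notin> K" if i: "i \<in> {2..N}" for i
  proof -
    define x where "x = N + 1 - i"
    have x: "x \<in> {1..N-1}" "N + 1 - x = i" using i unfolding x_def by auto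
    have "x \<in> lines N K \<longleftrightarrow> i \<notin> K" unfolding lines_def using x by auto
    moreover have "x \<in> lines N K \<longleftrightarrow> x \<in> line_of N m K ` {1..m-1}"
    proof
      assume "x \<in> lines N K"
      then obtain s where s: "s \<in> {1..m}" "line_of N m K s = x" using in_lines_ex_line_of by blast
      then have "s \<noteq> m" using line_of_m x by auto
      then show "x \<in> line_of N m K ` {1..m-1}" using s by auto
    next
      assume "x \<in> line_of N m K ` {1..m-1}"
      then show "x \<in> lines N K" using line_of_in_lines by auto
    qed
    ultimately show ?thesis unfolding x_def by simp
  qed
  have "shape.line ` {1..m-1} = line_of N m K ` {1..m-1}"
    using shape_line by (intro image_cong) auto
  then show ?thesis
    unfolding shape.free_cols_def
  proof (intro equalityI subsetI)
    fix i assume "i \<in> {i \<in> {2..N}. N + 1 - i \<notin> shape.line ` {1..m-1}}"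
    then show "i \<in> K" using key \<open>shape.line ` {1..m-1} = line_of N m K ` {1..m-1}\<close> by auto
  next
    fix i assume i: "i \<in> K"
    then have "i \<in> {2..N}" using K_sub by auto
    then show "i \<in> {i \<in> {2..N}. N + 1 - i \<notin> shape.line ` {1..m-1}}"
      using key i \<open>shape.line ` {1..m-1} = line_of N m K ` {1..m-1}\<close> by auto
  qed
qed

end

context row_shape
begin

lemma lines_free_cols: "lines N free_cols = line ` {1..m}"
proof (intro equalityI subsetI)
  fix x assume x: "x \<in> lines N free_cols"
  show "x \<in> line ` {1..m}"
  proof (cases "x = 0")
    case True
    then show ?thesis using line_m m_pos by (auto intro: image_eqI[of _ _ m])
  next
    case False
    then have "x \<in> {1..N-1}" "N + 1 - x \<notin> free_cols" using x unfolding lines_def by auto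
    then have "N + 1 - (N + 1 - x) \<in> line ` {1..m-1}" unfolding free_cols_def by auto
    then show ?thesis using \<open>x \<in> {1..N-1}\<close> by auto
  qed
next
  fix x assume "x \<in> line ` {1..m}"
  then obtain s where s: "s \<in> {1..m}" "x = line s" by auto
  show "x \<in> lines N free_cols"
  proof (cases "s = m")
    case True
    then show ?thesis using s line_m m_pos m_le unfolding lines_def by auto
  next
    case False
    then have s1: "s \<in> {1..m-1}" using s by auto
    then have "line s \<in> {1..N-1}" using line_range by simp
    then have "N + 1 - line s \<notin> free_cols" using s1 unfolding free_cols_def by (auto simp: Suc_diff_le)
    then show ?thesis using \<open>line s \<in> {1..N-1}\<close> s unfolding lines_def by auto
  qed
qed

lemma sorted_lines_free_cols: "sorted_list_of_set (line ` {1..m}) = map (\<lambda>j. line (m - j)) [0..<m]"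
proof -
  have "card (line ` {1..m}) = m"
    using inj_on_subset[OF inj_on_line, of "{1..m}"] by (simp add: card_image)
  moreover have "sorted_wrt (<) (map (\<lambda>j. line (m - j)) [0..<m])"
    unfolding sorted_wrt_iff_nth_less by (auto intro!: line_strict)
  moreover have "set (map (\<lambda>j. line (m - j)) [0..<m]) = line ` {1..m}"
  proof (intro equalityI subsetI)
    fix x assume "x \<in> set (map (\<lambda>j. line (m - j)) [0..<m])"
    then show "x \<in> line ` {1..m}" by auto
  next
    fix x assume "x \<in> line ` {1..m}"
    then obtain s where s: "s \<in> {1..m}" "x = line s" by auto
    then have "x = line (m - (m - s))" "m - s < m" by auto
    then show "x \<in> set (map (\<lambda>j. line (m - j)) [0..<m])" by auto
  qed
  ultimately show ?thesis
    by (subst sorted_list_of_set_unique[symmetric]) auto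
qed

lemma line_of_free_cols: "s \<le> m \<Longrightarrow> line_of N m free_cols s = line s"
  unfolding line_of_def lines_free_cols sorted_lines_free_cols using line_0 by auto

lemma tau_of_free_cols: "tau_of N m free_cols = \<tau>"
proof
  fix s show "tau_of N m free_cols s = \<tau> s"
    unfolding tau_of_def using line_of_free_cols line_step tau_outside by auto
qed

lemma a_of_free_cols: "a_of N m path free_cols = a"
proof
  fix s
  show "a_of N m path free_cols s = a s"
  proof (cases "s \<in> {1..m-1}")
    case False
    then show ?thesis using a_outside[OF False] unfolding a_of_def if_not_P[OF False] by simp
  next
    case True
    then have "Suc s \<in> {1..m}" "line s \<in> {1..N-1}" "s \<le> m" using line_range by auto
    moreover have "line (Suc s) < line s" using line_strict[of s "Suc s"] True by auto
    ultimately have "rows_upto N path (line s - 1) = north_rows s"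
      using rows_upto_path[of "Suc s" "line s - 1"] by simp
    moreover have "line_of N m free_cols s = line s" using line_of_free_cols \<open>s \<le> m\<close> by simp
    ultimately show ?thesis unfolding a_of_def north_rows_def using True by simp
  qed
qed

end

section \<open>Assembling the two sides\<close>

definition rise_subsets :: "nat \<Rightarrow> nat \<Rightarrow> (nat \<Rightarrow> nat) \<Rightarrow> nat set set" where
  "rise_subsets N d e = {K. K \<subseteq> rise_cols N e \<and> card K = d}"

definition lhs_summand ::
    "nat \<Rightarrow> nat \<Rightarrow> (nat \<Rightarrow> nat) \<Rightarrow> 'a::field \<Rightarrow> 'a \<Rightarrow> (nat \<Rightarrow> nat) \<Rightarrow> nat set \<Rightarrow> 'a" where
  "lhs_summand N l \<mu> q t e K = t ^ area N e * (\<Prod>i\<in>K. inverse (t ^ colarea N e i))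
     * (\<Sum>P\<in>{P\<in>labellings N l e. has_wt N P \<mu>}. q ^ dinv N e P)"

definition rhs_summand ::
    "nat \<Rightarrow> (nat \<Rightarrow> nat) \<Rightarrow> 'a::field \<Rightarrow> 'a \<Rightarrow> nat set \<Rightarrow> (nat \<Rightarrow> nat) \<Rightarrow> (nat \<Rightarrow> nat) \<Rightarrow> 'a" where
  "rhs_summand m \<mu> q t J a \<tau> = t ^ (\<Sum>i=1..m-1. a i) * q ^ (dstat m (\<lambda>j. a (j - 1)) \<tau> + hstat (m-1) J a)
     * Ncoef m (alphaJ J a) (betaT a \<tau>) \<mu> q"

lemma finite_rise_subsets: "finite (rise_subsets N d e)"
  unfolding rise_subsets_def using finite_rise_cols by (auto intro: finite_subset[of _ "Pow (rise_cols N e)"])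

lemma coeff_lhs_poly:
  "coeff (lhs_poly N l \<mu> q t) d = (\<Sum>e\<in>dyck N. \<Sum>K\<in>rise_subsets N d e. lhs_summand N l \<mu> q t e K)"
proof -
  have "coeff (lhs_poly N l \<mu> q t) d =
    (\<Sum>e\<in>dyck N. \<Sum>P\<in>{P\<in>labellings N l e. has_wt N P \<mu>}.
        t ^ area N e * q ^ dinv N e P * (\<Sum>K\<in>rise_subsets N d e. \<Prod>i\<in>K. inverse (t ^ colarea N e i)))"
    unfolding lhs_poly_def coeff_sum coeff_smult rise_cols_def[symmetric] rise_subsets_def
    by (simp add: coeff_prod_linear[OF finite_rise_cols])
  also have "\<dots> = (\<Sum>e\<in>dyck N. \<Sum>K\<in>rise_subsets N d e. lhs_summand N l \<mu> q t e K)"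
    unfolding lhs_summand_def
    by (intro sum.cong refl) (simp add: sum_distrib_left sum_distrib_right mult_ac, subst sum.swap, simp)
  finally show ?thesis .
qed

lemma (in row_shape) lhs_summand_eq:
  assumes "t \<noteq> 0"
  shows "lhs_summand N l \<mu> q t path free_cols = (\<Sum>J\<in>admissible_sets l. rhs_summand m \<mu> q t J a \<tau>)"
proof -
  have "Ncoef m (alphaJ J a) (betaT a \<tau>) \<mu> q = (\<Sum>S\<in>fillings J \<mu>. q ^ hw0 m (alphaJ J a) (betaT a \<tau>) S)"
    if "J \<in> admissible_sets l" for J
    using that unfolding Ncoef_def fillings_def admissible_sets_def by auto
  then show ?thesis
    unfolding lhs_summand_def rhs_summand_def area_free_cols_weight[OF assms]
      weighted_labellings_def[symmetric] sum_weighted_labellings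
    by (simp add: sum_distrib_left mult.assoc)
qed

definition row_shapes :: "nat \<Rightarrow> nat \<Rightarrow> ((nat \<Rightarrow> nat) \<times> (nat \<Rightarrow> nat)) set" where
  "row_shapes N m = {(a,\<tau>). row_shape N m a \<tau>}"

lemma rise_choice_shape:
  assumes "e \<in> dyck N" "K \<in> rise_subsets N (N - m) e" "1 \<le> m" "m \<le> N"
  shows "(a_of N m e K, tau_of N m K) \<in> row_shapes N m"
    and "row_shape.path N m (a_of N m e K) (tau_of N m K) = e"
    and "row_shape.free_cols N m (tau_of N m K) = K"
proof -
  interpret rise_choice N m e K
    using assms by unfold_locales (auto simp: rise_subsets_def)
  show "(a_of N m e K, tau_of N m K) \<in> row_shapes N m"
    using row_shape_of by (simp add: row_shapes_def)
  show "row_shape.path N m (a_of N m e K) (tau_of N m K) = e" by (rule shape_path)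
  show "row_shape.free_cols N m (tau_of N m K) = K" by (rule shape_free_cols)
qed

lemma (in row_shape) path_choice: "(path, free_cols) \<in> Sigma (dyck N) (rise_subsets N (N - m))"
  using path_dyck free_cols_rise card_free_cols by (simp add: rise_subsets_def)

lemma sum_rise_choices:
  assumes "1 \<le> m" "m \<le> N"
  shows "(\<Sum>(e,K)\<in>Sigma (dyck N) (rise_subsets N (N - m)). f e K) =
         (\<Sum>(a,\<tau>)\<in>row_shapes N m. f (row_shape.path N m a \<tau>) (row_shape.free_cols N m \<tau>))"
proof (rule sum.reindex_bij_witness[where i = "\<lambda>(a,\<tau>). (row_shape.path N m a \<tau>, row_shape.free_cols N m \<tau>)"
                                     and j = "\<lambda>(e,K). (a_of N m e K, tau_of N m K)"])
  fix p assume "p \<in> row_shapes N m"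
  then obtain a \<tau> where p: "p = (a,\<tau>)" and shape: "row_shape N m a \<tau>" by (auto simp: row_shapes_def)
  interpret row_shape N m a \<tau> by (rule shape)
  show "(case case p of (a, \<tau>) \<Rightarrow> (row_shape.path N m a \<tau>, row_shape.free_cols N m \<tau>) of
      (e, K) \<Rightarrow> (a_of N m e K, tau_of N m K)) = p"
    using p a_of_free_cols tau_of_free_cols by simp
  show "(case p of (a, \<tau>) \<Rightarrow> (row_shape.path N m a \<tau>, row_shape.free_cols N m \<tau>))
      \<in> Sigma (dyck N) (rise_subsets N (N - m))"
    using p path_choice by simp
qed (use rise_choice_shape[OF _ _ assms] in auto)

lemma finite_row_shapes:
  assumes "1 \<le> m" "m \<le> N"
  shows "finite (row_shapes N m)"
proof -
  have "row_shapes N m \<subseteq> (\<lambda>(e,K). (a_of N m e K, tau_of N m K)) ` Sigma (dyck N) (rise_subsets N (N - m))"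
  proof
    fix p assume "p \<in> row_shapes N m"
    then obtain a \<tau> where p: "p = (a,\<tau>)" and shape: "row_shape N m a \<tau>" by (auto simp: row_shapes_def)
    interpret row_shape N m a \<tau> by (rule shape)
    show "p \<in> (\<lambda>(e,K). (a_of N m e K, tau_of N m K)) ` Sigma (dyck N) (rise_subsets N (N - m))"
      using path_choice a_of_free_cols tau_of_free_cols p by (auto intro: image_eqI[of _ _ "(path, free_cols)"])
  qed
  moreover have "finite (Sigma (dyck N) (rise_subsets N (N - m)))"
    using finite_dyck finite_rise_subsets by blast
  ultimately show ?thesis using finite_subset by blast
qed

lemma rhs_index_iff:
  assumes "1 \<le> m" "m \<le> N"
  shows "(J,a,\<tau>) \<in> rhs_index N m l \<longleftrightarrow> (a,\<tau>) \<in> row_shapes N m \<and> J \<in> row_shape.admissible_sets m a \<tau> l"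
proof
  assume h: "(J,a,\<tau>) \<in> rhs_index N m l"
  have "a j \<le> a (j-1) + 1 + \<tau> j" if "j \<in> {1..m}" for j
    using h that unfolding rhs_index_def alphaJ_def betaT_def by fastforce
  then have shape: "row_shape N m a \<tau>"
    using h assms unfolding rhs_index_def row_shape_def by auto
  then show "(a,\<tau>) \<in> row_shapes N m \<and> J \<in> row_shape.admissible_sets m a \<tau> l"
    using h unfolding rhs_index_def row_shapes_def row_shape.admissible_sets_def[OF shape] by auto
next
  assume h: "(a,\<tau>) \<in> row_shapes N m \<and> J \<in> row_shape.admissible_sets m a \<tau> l"
  then have shape: "row_shape N m a \<tau>" unfolding row_shapes_def by simp
  then show "(J,a,\<tau>) \<in> rhs_index N m l"
    using h unfolding rhs_index_def row_shape_def row_shape.admissible_sets_def[OF shape] by auto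
qed

lemma sum_rhs_index:
  assumes "1 \<le> m" "m \<le> N"
  shows "(\<Sum>(J,a,\<tau>)\<in>rhs_index N m l. g J a \<tau>) =
         (\<Sum>(a,\<tau>)\<in>row_shapes N m. \<Sum>J\<in>row_shape.admissible_sets m a \<tau> l. g J a \<tau>)"
proof -
  have "(\<Sum>(J,a,\<tau>)\<in>rhs_index N m l. g J a \<tau>) =
        (\<Sum>(p,J)\<in>(SIGMA p:row_shapes N m. row_shape.admissible_sets m (fst p) (snd p) l). g J (fst p) (snd p))"
    by (rule sum.reindex_bij_witness[where i = "\<lambda>((a,\<tau>),J). (J,a,\<tau>)" and j = "\<lambda>(J,a,\<tau>). ((a,\<tau>),J)"])
       (auto simp: rhs_index_iff[OF assms])
  also have "\<dots> = (\<Sum>(a,\<tau>)\<in>row_shapes N m. \<Sum>J\<in>row_shape.admissible_sets m a \<tau> l. g J a \<tau>)"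
    using finite_row_shapes[OF assms] row_shape.finite_admissible_sets
    by (subst sum.Sigma[symmetric]) (auto simp: row_shapes_def case_prod_beta)
  finally show ?thesis .
qed

theorem theorem5p1p1:
  fixes N m l :: nat and \<mu> :: "nat \<Rightarrow> nat" and q t :: "'a::field"
  assumes "l < m" and "m \<le> N" and "t \<noteq> 0"
  shows "coeff (lhs_poly N l \<mu> q t) (N - m) =
    (\<Sum>(J,a,\<tau>)\<in>rhs_index N m l.
        t ^ (\<Sum>i=1..m-1. a i) * q ^ (dstat m (\<lambda>j. a (j - 1)) \<tau> + hstat (m-1) J a)
        * Ncoef m (alphaJ J a) (betaT a \<tau>) \<mu> q)"
proof -
  have m: "1 \<le> m" "m \<le> N" using assms by auto
  have "coeff (lhs_poly N l \<mu> q t) (N - m) =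
      (\<Sum>(e,K)\<in>Sigma (dyck N) (rise_subsets N (N - m)). lhs_summand N l \<mu> q t e K)"
    unfolding coeff_lhs_poly using finite_dyck finite_rise_subsets by (simp add: sum.Sigma)
  also have "\<dots> = (\<Sum>(a,\<tau>)\<in>row_shapes N m.
      lhs_summand N l \<mu> q t (row_shape.path N m a \<tau>) (row_shape.free_cols N m \<tau>))"
    by (rule sum_rise_choices[OF m])
  also have "\<dots> = (\<Sum>(a,\<tau>)\<in>row_shapes N m. \<Sum>J\<in>row_shape.admissible_sets m a \<tau> l. rhs_summand m \<mu> q t J a \<tau>)"
    using row_shape.lhs_summand_eq[OF _ assms(3)] by (intro sum.cong refl) (auto simp: row_shapes_def)
  also have "\<dots> = (\<Sum>(J,a,\<tau>)\<in>rhs_index N m l. rhs_summand m \<mu> q t J a \<tau>)"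
    by (rule sum_rhs_index[OF m, symmetric])
  finally show ?thesis unfolding rhs_summand_def .
qed

end
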